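(* Let $(X,\mathcal{A},\mu,T)$ be an ergodic probability preserving system and $(R_l)_{l\ge1}$ a sequence of Borel measurable maps $R_l:X\to\mathfrak{E}$ into a compact metric space $(\mathfrak{E},d_{\mathfrak{E}})$ which is asymptotically $T$-invariant in measure. Let $\mathfrak{K}$ be a compact set in $(\mathfrak{P},d_{\mathfrak{P}})$. Then $$\sup_{\nu,\overline\nu\in\mathfrak{K}}D_{\mathfrak{E}}(\mathrm{law}_\nu(R_l),\mathrm{law}_{\overline\nu}(R_l))\to0\qquad\text{as }l\to\infty.$$ Hence for any random element $R$ of $\mathfrak{E}$ and any two sequences $(\nu_l),(\overline\nu_l)$ in $\mathfrak{K}$, $R_l\overset{\overline\nu_l}{\Longrightarrow}R$ implies $R_l\overset{\nu_l}{\Longrightarrow}R$ as $l\to\infty$.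
   Context: $\mathfrak{P}$: probability measures $\nu\ll\mu$ on $(X,\mathcal{A})$ with $d_{\mathfrak{P}}(\nu,\nu')=2\sup_A|\nu(A)-\nu'(A)|$. $\mathrm{law}_\nu(R):=\nu\circ R^{-1}$. $(R_l)$ is asymptotically $T$-invariant in measure if $d_{\mathfrak{E}}(R_l\circ T,R_l)\to0$ in $\mu$-measure. $D_{\mathfrak{E}}$ is the metric on Borel probabilities on $\mathfrak{E}$ given by $D_{\mathfrak{E}}(Q,Q'):=\sum_{j\ge1}2^{-(j+1)}|\int\chi_j\,dQ-\int\chi_j\,dQ'|$, where $\chi_j=\vartheta_j/\sup|\vartheta_j|$ for a fixed sequence $(\vartheta_j)$ of Lipschitz functions dense in $\mathcal{C}(\mathfrak{E})$; it metrizes weak convergence. $\overset{\nu}{\Longrightarrow}$: weak convergence of laws under $\nu$. *)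

theory Defs
  imports "HOL-Probability.Probability"
begin

definition ergodic_pps :: "'a measure \<Rightarrow> ('a \<Rightarrow> 'a) \<Rightarrow> bool" where
  "ergodic_pps \<mu> T \<longleftrightarrow>
     prob_space \<mu> \<and> T \<in> measurable \<mu> \<mu> \<and>
     (\<forall>A\<in>sets \<mu>. measure \<mu> (T -` A \<inter> space \<mu>) = measure \<mu> A) \<and>
     (\<forall>A\<in>sets \<mu>. T -` A \<inter> space \<mu> = A \<longrightarrow> measure \<mu> A = 0 \<or> measure \<mu> A = 1)"

definition probs_ac :: "'a measure \<Rightarrow> 'a measure set" where
  "probs_ac \<mu> = {\<nu>. prob_space \<nu> \<and> sets \<nu> = sets \<mu> \<and> absolutely_continuous \<mu> \<nu>}"

definition dP :: "'a measure \<Rightarrow> 'a measure \<Rightarrow> 'a measure \<Rightarrow> real" where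
  "dP \<mu> \<nu> \<nu>' = 2 * (SUP A\<in>sets \<mu>. \<bar>measure \<nu> A - measure \<nu>' A\<bar>)"

text \<open>Compactness of K in the metric space (P, d_P), expressed as sequential compactness
  (equivalent to compactness in metric spaces).\<close>
definition dP_compact :: "'a measure \<Rightarrow> 'a measure set \<Rightarrow> bool" where
  "dP_compact \<mu> K \<longleftrightarrow> K \<subseteq> probs_ac \<mu> \<and>
     (\<forall>s::nat \<Rightarrow> 'a measure. (\<forall>n. s n \<in> K) \<longrightarrow>
        (\<exists>r \<nu>. strict_mono r \<and> \<nu> \<in> K \<and> (\<lambda>n. dP \<mu> (s (r n)) \<nu>) \<longlonglongrightarrow> 0))"

definition asympt_inv_in_measure ::
    "'a measure \<Rightarrow> ('a \<Rightarrow> 'a) \<Rightarrow> (nat \<Rightarrow> 'a \<Rightarrow> 'e::metric_space) \<Rightarrow> bool" where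
  "asympt_inv_in_measure \<mu> T R \<longleftrightarrow>
     (\<forall>\<epsilon>>0. (\<lambda>l. measure \<mu> {x\<in>space \<mu>. dist (R l (T x)) (R l x) > \<epsilon>}) \<longlonglongrightarrow> 0)"

definition law :: "'a measure \<Rightarrow> ('a \<Rightarrow> 'e::topological_space) \<Rightarrow> 'e measure" where
  "law \<nu> R = distr \<nu> borel R"

text \<open>Admissible sequence (theta_j): Lipschitz functions, dense in C(E) for the sup norm.
  The paper's index j \<ge> 1 corresponds to index j - 1 here (sequence indexed from 0).\<close>
definition admissible_seq :: "(nat \<Rightarrow> 'e::metric_space \<Rightarrow> real) \<Rightarrow> bool" where
  "admissible_seq \<theta> \<longleftrightarrow>
     (\<forall>j. \<exists>L. L-lipschitz_on UNIV (\<theta> j)) \<and>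
     (\<forall>f::'e \<Rightarrow> real. continuous_on UNIV f \<longrightarrow>
        (\<forall>\<epsilon>>0. \<exists>j. \<forall>x. \<bar>f x - \<theta> j x\<bar> < \<epsilon>))"

definition chi :: "(nat \<Rightarrow> 'e \<Rightarrow> real) \<Rightarrow> nat \<Rightarrow> 'e \<Rightarrow> real" where
  "chi \<theta> j x = \<theta> j x / (SUP y. \<bar>\<theta> j y\<bar>)"

text \<open>D_E(Q,Q') = sum_{j\<ge>1} 2^{-(j+1)} |int chi_j dQ - int chi_j dQ'|, reindexed from 0.\<close>
definition DE :: "(nat \<Rightarrow> 'e \<Rightarrow> real) \<Rightarrow> 'e measure \<Rightarrow> 'e measure \<Rightarrow> real" where
  "DE \<theta> Q Q' = (\<Sum>j. (1/2) ^ (j + 2) *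
      \<bar>(\<integral>y. chi \<theta> j y \<partial>Q) - (\<integral>y. chi \<theta> j y \<partial>Q')\<bar>)"

definition weak_conv_law :: "(nat \<Rightarrow> 'e::topological_space measure) \<Rightarrow> 'e measure \<Rightarrow> bool" where
  "weak_conv_law Qs Q \<longleftrightarrow>
     (\<forall>f::'e \<Rightarrow> real. continuous_on UNIV f \<longrightarrow> bounded (range f) \<longrightarrow>
        (\<lambda>l. \<integral>y. f y \<partial>(Qs l)) \<longlonglongrightarrow> (\<integral>y. f y \<partial>Q))"

end

theory Submission
  imports Defs
begin

(* For nu in P with density h, the j-th coordinate of D_E(law_nu R_l, law_mu R_l) is governed
   by the covariance  int h F_l dmu - int h dmu * int F_l dmu  of h and F_l = chi_j o R_l.
   Asymptotic invariance makes F_l o T^k close to F_l in L^1 for each fixed k, so h may be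
   replaced by its Birkhoff averages, which converge in L^1 to the constant int h dmu by the
   ergodic theorem.  After truncating h the ergodic theorem is only needed for bounded functions,
   where it follows from the maximal ergodic theorem.  Hence D_E(law_nu R_l, law_mu R_l) -> 0
   for every nu.  Since |int F dnu - int F dnu'| <= d_P(nu, nu') whenever |F| <= 1, these
   functions of nu are 1/2-Lipschitz for d_P uniformly in l, so the convergence is uniform on the
   compact set K, and the triangle inequality through mu gives the first claim.  The second
   claim follows because D_E-closeness of two laws forces their integrals of each theta_j to be
   close, and the theta_j are uniformly dense in C(E). *)

lemma frequently_less_if_less_limsup:
  fixes a :: "nat \<Rightarrow> real"
  assumes "ereal t < limsup (\<lambda>n. ereal (a n))"
  shows "\<exists>\<^sub>F n in sequentially. t < a n"
proof (rule ccontr)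
  assume "\<not> ?thesis"
  then have "\<forall>\<^sub>F n in sequentially. ereal (a n) \<le> ereal t"
    by (simp add: not_frequently not_less)
  then have "limsup (\<lambda>n. ereal (a n)) \<le> ereal t"
    by (rule Limsup_bounded)
  with assms show False
    by simp
qed

lemma tendsto_zero_if_approximable:
  fixes x :: "nat \<Rightarrow> real"
  assumes "\<And>\<epsilon>. 0 < \<epsilon> \<Longrightarrow> \<exists>y. y \<longlonglongrightarrow> 0 \<and> (\<forall>l. \<bar>x l\<bar> \<le> \<bar>y l\<bar> + \<epsilon>)"
  shows "x \<longlonglongrightarrow> 0"
proof (rule LIMSEQ_I)
  fix r :: real
  assume "0 < r"
  then obtain y where y: "y \<longlonglongrightarrow> 0" "\<And>l. \<bar>x l\<bar> \<le> \<bar>y l\<bar> + r / 2"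
    using assms[of "r / 2"] by auto
  obtain N where N: "\<And>l. l \<ge> N \<Longrightarrow> \<bar>y l\<bar> < r / 2"
    using LIMSEQ_D[OF y(1), of "r / 2"] \<open>0 < r\<close> by auto
  have "norm (x l - 0) < r" if "l \<ge> N" for l
    using N[OF that] y(2)[of l] by simp
  then show "\<exists>N. \<forall>l\<ge>N. norm (x l - 0) < r"
    by blast
qed

lemma abs_mult_le_if_abs_le_one:
  fixes a b :: real
  assumes "\<bar>b\<bar> \<le> 1"
  shows "\<bar>a * b\<bar> \<le> \<bar>a\<bar>"
  using assms by (simp add: abs_mult mult_left_le)

lemma abs_integral_le_integral:
  fixes f g :: "'a \<Rightarrow> real"
  assumes "integrable M g" and "\<And>x. x \<in> space M \<Longrightarrow> \<bar>f x\<bar> \<le> g x"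
  shows "\<bar>integral\<^sup>L M f\<bar> \<le> integral\<^sup>L M g"
  using integral_abs_bound[of M f] integral_mono'[of M g "\<lambda>x. \<bar>f x\<bar>"] assms
  by (meson abs_ge_zero order_trans)

lemma abs_integral_mult_le:
  fixes g F :: "'a \<Rightarrow> real"
  assumes "integrable M g" and "F \<in> borel_measurable M" and "\<And>x. \<bar>F x\<bar> \<le> 1"
  shows "\<bar>\<integral>x. g x * F x \<partial>M\<bar> \<le> (\<integral>x. \<bar>g x\<bar> \<partial>M)"
proof (rule abs_integral_le_integral)
  show "integrable M (\<lambda>x. \<bar>g x\<bar>)"
    using assms(1) by simp
  show "\<bar>g x * F x\<bar> \<le> \<bar>g x\<bar>" for x
    using assms(3) by (rule abs_mult_le_if_abs_le_one)
qed

lemma (in finite_measure) integrable_bounded: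
  fixes f :: "'a \<Rightarrow> real"
  assumes "f \<in> borel_measurable M" and "\<And>x. \<bar>f x\<bar> \<le> B"
  shows "integrable M f"
  using assms by (intro integrable_const_bound[where B = B]) auto

lemma integral_abs_diff_truncation_tendsto:
  fixes h :: "'a \<Rightarrow> real"
  assumes "integrable M h"
  shows "(\<lambda>m. \<integral>x. \<bar>h x - max (- real m) (min (real m) (h x))\<bar> \<partial>M) \<longlonglongrightarrow> 0"
proof -
  have [measurable]: "h \<in> borel_measurable M"
    using assms by simp
  have AE_lim: "AE x in M. (\<lambda>m. \<bar>h x - max (- real m) (min (real m) (h x))\<bar>) \<longlonglongrightarrow> 0"
  proof (intro AE_I2 tendsto_eventually)
    fix x
    have "\<bar>h x - max (- real m) (min (real m) (h x))\<bar> = 0" if "m \<ge> nat \<lceil>\<bar>h x\<bar>\<rceil>" for m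
      using that by linarith
    then show "\<forall>\<^sub>F m in sequentially. \<bar>h x - max (- real m) (min (real m) (h x))\<bar> = 0"
      unfolding eventually_sequentially by blast
  qed
  have "(\<lambda>m. \<integral>x. \<bar>h x - max (- real m) (min (real m) (h x))\<bar> \<partial>M) \<longlonglongrightarrow> (\<integral>x. 0 \<partial>M)"
    by (rule integral_dominated_convergence[OF _ _ integrable_abs[OF assms] AE_lim]) auto
  then show ?thesis
    by simp
qed

section \<open>Birkhoff's ergodic theorem for bounded functions\<close>

locale measure_preserving_system = prob_space M for M :: "'a measure" +
  fixes T :: "'a \<Rightarrow> 'a"
  assumes T_measurable [measurable]: "T \<in> measurable M M"
    and distr_T: "distr M M T = M"
begin

lemma T_in_space: "x \<in> space M \<Longrightarrow> T x \<in> space M"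
  by (rule measurable_space[OF T_measurable])

lemma integral_comp_T:
  fixes f :: "'a \<Rightarrow> real"
  assumes [measurable]: "f \<in> borel_measurable M"
  shows "(\<integral>x. f (T x) \<partial>M) = integral\<^sup>L M f"
  by (subst (2) distr_T[symmetric]) (simp add: integral_distr)

definition birkhoff_sum :: "('a \<Rightarrow> real) \<Rightarrow> nat \<Rightarrow> 'a \<Rightarrow> real" where
  "birkhoff_sum f n x = (\<Sum>i<n. f ((T ^^ i) x))"

lemma birkhoff_sum_measurable [measurable]:
  assumes [measurable]: "f \<in> borel_measurable M"
  shows "birkhoff_sum f n \<in> borel_measurable M"
  unfolding birkhoff_sum_def by measurable

lemma birkhoff_sum_0 [simp]: "birkhoff_sum f 0 x = 0"
  by (simp add: birkhoff_sum_def)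

lemma birkhoff_sum_Suc: "birkhoff_sum f (Suc n) x = f x + birkhoff_sum f n (T x)"
  unfolding birkhoff_sum_def sum.lessThan_Suc_shift
  by (simp add: funpow_Suc_right del: funpow.simps)

lemma birkhoff_sum_diff_const: "birkhoff_sum (\<lambda>x. f x - c) n x = birkhoff_sum f n x - n * c"
  by (simp add: birkhoff_sum_def sum_subtractf)

lemma birkhoff_sum_uminus: "birkhoff_sum (\<lambda>x. - f x) n x = - birkhoff_sum f n x"
  by (simp add: birkhoff_sum_def sum_negf)

lemma birkhoff_sum_abs_le:
  assumes "\<And>y. \<bar>f y\<bar> \<le> B"
  shows "\<bar>birkhoff_sum f n x\<bar> \<le> n * B"
proof -
  have "\<bar>birkhoff_sum f n x\<bar> \<le> (\<Sum>i<n. \<bar>f ((T ^^ i) x)\<bar>)"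
    unfolding birkhoff_sum_def by (rule sum_abs)
  also have "\<dots> \<le> (\<Sum>i<n. B)"
    by (intro sum_mono assms)
  finally show ?thesis by simp
qed

lemma birkhoff_avg_abs_le:
  assumes "\<And>y. \<bar>f y\<bar> \<le> B"
  shows "\<bar>birkhoff_sum f n x / n\<bar> \<le> B"
proof (cases "n = 0")
  case True
  then show ?thesis using assms[of x] by simp
next
  case False
  then show ?thesis
    using birkhoff_sum_abs_le[of f B n x] assms by (simp add: abs_divide divide_le_eq mult.commute)
qed

definition max_birkhoff_sum :: "('a \<Rightarrow> real) \<Rightarrow> nat \<Rightarrow> 'a \<Rightarrow> real" where
  "max_birkhoff_sum f n x = Max ((\<lambda>k. birkhoff_sum f k x) ` {..n})"

lemma max_birkhoff_sum_measurable [measurable]: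
  assumes [measurable]: "f \<in> borel_measurable M"
  shows "max_birkhoff_sum f n \<in> borel_measurable M"
  unfolding max_birkhoff_sum_def by measurable

lemma max_birkhoff_sum_attained: "\<exists>k\<le>n. max_birkhoff_sum f n x = birkhoff_sum f k x"
proof -
  have "max_birkhoff_sum f n x \<in> (\<lambda>k. birkhoff_sum f k x) ` {..n}"
    unfolding max_birkhoff_sum_def by (intro Max_in) auto
  then show ?thesis by auto
qed

lemma birkhoff_sum_le_max: "k \<le> n \<Longrightarrow> birkhoff_sum f k x \<le> max_birkhoff_sum f n x"
  unfolding max_birkhoff_sum_def by (intro Max_ge) auto

lemma max_birkhoff_sum_nonneg: "0 \<le> max_birkhoff_sum f n x"
  using birkhoff_sum_le_max[of 0 n f x] by simp

lemma max_birkhoff_sum_abs_le: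
  assumes bound: "\<And>y. \<bar>f y\<bar> \<le> B"
  shows "\<bar>max_birkhoff_sum f n x\<bar> \<le> n * B"
proof -
  obtain k where k: "k \<le> n" "max_birkhoff_sum f n x = birkhoff_sum f k x"
    using max_birkhoff_sum_attained by blast
  have "0 \<le> B"
    using order_trans[OF abs_ge_zero bound] .
  with k have "real k * B \<le> real n * B"
    by (intro mult_right_mono) auto
  then show ?thesis
    using k birkhoff_sum_abs_le[of f B k x] bound by simp
qed

text \<open>Where the maximal sum is positive it is attained at some \<open>k \<ge> 1\<close>, and
  \<open>birkhoff_sum f k x = f x + birkhoff_sum f (k - 1) (T x)\<close>.\<close>
lemma max_birkhoff_sum_diff_le:
  "max_birkhoff_sum f n x - max_birkhoff_sum f n (T x)
     \<le> indicator {y. 0 < max_birkhoff_sum f n y} x * f x"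
proof (cases "0 < max_birkhoff_sum f n x")
  case True
  obtain k where k: "k \<le> n" "max_birkhoff_sum f n x = birkhoff_sum f k x"
    using max_birkhoff_sum_attained by blast
  with True obtain k' where "k = Suc k'"
    by (cases k) auto
  with k have "max_birkhoff_sum f n x = f x + birkhoff_sum f k' (T x)" "k' \<le> n"
    by (auto simp: birkhoff_sum_Suc)
  with True show ?thesis
    using birkhoff_sum_le_max[of k' n f "T x"] by simp
next
  case False
  then show ?thesis
    using max_birkhoff_sum_nonneg[of f n x] max_birkhoff_sum_nonneg[of f n "T x"] by simp
qed

theorem maximal_ergodic:
  fixes f :: "'a \<Rightarrow> real"
  assumes [measurable]: "f \<in> borel_measurable M" and bound: "\<And>x. \<bar>f x\<bar> \<le> B"
  shows "0 \<le> (\<integral>x. indicator {y. 0 < max_birkhoff_sum f n y} x * f x \<partial>M)"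
proof -
  have int_max: "integrable M (max_birkhoff_sum f n)"
    by (rule integrable_bounded[OF _ max_birkhoff_sum_abs_le[OF bound]]) simp
  have int_max_T: "integrable M (\<lambda>x. max_birkhoff_sum f n (T x))"
    by (rule integrable_bounded[OF _ max_birkhoff_sum_abs_le[OF bound]]) simp
  have int_f: "integrable M (\<lambda>x. indicator {y. 0 < max_birkhoff_sum f n y} x * f x)"
    using bound order_trans[OF abs_ge_zero bound]
    by (intro integrable_bounded[where B = B]) (simp_all add: indicator_def)
  have "0 = (\<integral>x. max_birkhoff_sum f n x - max_birkhoff_sum f n (T x) \<partial>M)"
    using int_max int_max_T by (simp add: integral_comp_T)
  also have "\<dots> \<le> (\<integral>x. indicator {y. 0 < max_birkhoff_sum f n y} x * f x \<partial>M)"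
    by (intro integral_mono int_f Bochner_Integration.integrable_diff int_max int_max_T
        max_birkhoff_sum_diff_le)
  finally show ?thesis .
qed

lemma limsup_birkhoff_avg_comp_T:
  assumes bound: "\<And>y. \<bar>f y\<bar> \<le> B"
  shows "limsup (\<lambda>n. ereal (birkhoff_sum f n (T x) / n))
       = limsup (\<lambda>n. ereal (birkhoff_sum f n x / n))"
proof -
  define e where "e n = birkhoff_sum f (Suc n) x / Suc n - birkhoff_sum f n (T x) / n" for n
  have e_eq: "e n = f x / Suc n - birkhoff_sum f n (T x) / n / Suc n" for n
    by (cases "n = 0") (simp_all add: e_def birkhoff_sum_Suc divide_simps, argo)
  have "e \<longlonglongrightarrow> 0"
  proof -
    have "(\<lambda>n. birkhoff_sum f n (T x) / n / Suc n) \<longlonglongrightarrow> 0"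
    proof (rule Lim_null_comparison)
      show "\<forall>\<^sub>F n in sequentially. norm (birkhoff_sum f n (T x) / n / Suc n) \<le> \<bar>B\<bar> / Suc n"
      proof (intro always_eventually allI)
        fix n
        have "\<bar>birkhoff_sum f n (T x) / n\<bar> \<le> \<bar>B\<bar>"
          using birkhoff_avg_abs_le[of f B n "T x", OF bound] by linarith
        then show "norm (birkhoff_sum f n (T x) / n / Suc n) \<le> \<bar>B\<bar> / Suc n"
          unfolding real_norm_def abs_divide[of "_ / _"] abs_of_nat
          by (intro divide_right_mono) auto
      qed
      show "(\<lambda>n. \<bar>B\<bar> / real (Suc n)) \<longlonglongrightarrow> 0"
        using LIMSEQ_Suc[OF lim_const_over_n[of "\<bar>B\<bar>"]] by simp
    qed
    then show ?thesis
      unfolding e_eq using LIMSEQ_Suc[OF lim_const_over_n[of "f x"]]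
      by (auto intro: tendsto_diff[THEN tendsto_eq_rhs])
  qed
  then have "(\<lambda>n. ereal (e n)) \<longlonglongrightarrow> 0"
    by (simp add: zero_ereal_def)
  then have "limsup (\<lambda>n. ereal (e n) + ereal (birkhoff_sum f n (T x) / n))
           = limsup (\<lambda>n. ereal (birkhoff_sum f n (T x) / n))"
    by (subst ereal_limsup_lim_add) auto
  moreover have "limsup (\<lambda>n. ereal (birkhoff_sum f (n + 1) x / real (n + 1)))
      = limsup (\<lambda>n. ereal (birkhoff_sum f n x / n))"
    by (rule limsup_shift)
  ultimately show ?thesis
    by (simp add: e_def)
qed

lemma eventually_max_birkhoff_sum_pos:
  assumes "ereal t < limsup (\<lambda>n. ereal (birkhoff_sum f n x / n))"
  shows "\<forall>\<^sub>F m in sequentially. 0 < max_birkhoff_sum (\<lambda>x. f x - t) m x"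
proof -
  obtain n where n: "n \<ge> 1" "t < birkhoff_sum f n x / n"
    using frequently_less_if_less_limsup[OF assms] unfolding frequently_sequentially by blast
  then have "n * t < birkhoff_sum f n x"
    by (simp add: less_divide_eq mult.commute)
  then have "0 < birkhoff_sum (\<lambda>x. f x - t) n x"
    unfolding birkhoff_sum_diff_const by simp
  then show ?thesis
    unfolding eventually_sequentially by (auto intro: less_le_trans[OF _ birkhoff_sum_le_max])
qed

text \<open>The maximal ergodic theorem for \<open>f - t\<close> passes to the limit by dominated convergence.\<close>
lemma integral_ge_if_AE_limsup_birkhoff_avg_gt:
  fixes f :: "'a \<Rightarrow> real"
  assumes [measurable]: "f \<in> borel_measurable M" and bound: "\<And>x. \<bar>f x\<bar> \<le> B"
    and AE_gt: "AE x in M. ereal t < limsup (\<lambda>n. ereal (birkhoff_sum f n x / n))"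
  shows "t \<le> integral\<^sup>L M f"
proof -
  define g where "g x = f x - t" for x
  have [measurable]: "g \<in> borel_measurable M"
    unfolding g_def by measurable
  have g_bound: "\<bar>g x\<bar> \<le> B + \<bar>t\<bar>" for x
    using bound[of x] unfolding g_def by linarith
  have AE_lim: "AE x in M. (\<lambda>n. indicator {y. 0 < max_birkhoff_sum g n y} x * g x) \<longlonglongrightarrow> g x"
    using AE_gt
  proof eventually_elim
    case (elim x)
    from eventually_max_birkhoff_sum_pos[OF elim]
    have "\<forall>\<^sub>F m in sequentially. indicator {y. 0 < max_birkhoff_sum g m y} x * g x = g x"
      unfolding g_def by (rule eventually_mono) simp
    then show ?case
      by (rule tendsto_eventually)
  qed
  have "\<bar>indicator {y. 0 < max_birkhoff_sum g n y} x * g x\<bar> \<le> B + \<bar>t\<bar>" for n x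
    using g_bound[of x] order_trans[OF abs_ge_zero g_bound] by (simp add: indicator_def)
  then have lim: "(\<lambda>n. \<integral>x. indicator {y. 0 < max_birkhoff_sum g n y} x * g x \<partial>M)
      \<longlonglongrightarrow> integral\<^sup>L M g"
    by (intro integral_dominated_convergence[OF _ _ _ AE_lim, where w = "\<lambda>_. B + \<bar>t\<bar>"]) simp_all
  have "0 \<le> (\<integral>x. indicator {y. 0 < max_birkhoff_sum g n y} x * g x \<partial>M)" for n
    by (rule maximal_ergodic[of g "B + \<bar>t\<bar>"]) (simp_all add: g_bound)
  then have "0 \<le> integral\<^sup>L M g"
    using LIMSEQ_le_const[OF lim] by blast
  moreover have "integral\<^sup>L M g = integral\<^sup>L M f - t"
    unfolding g_def
    by (subst Bochner_Integration.integral_diff[OF integrable_bounded[OF _ bound]])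
      (simp_all add: prob_space)
  ultimately show ?thesis
    by simp
qed

end

locale ergodic_system = measure_preserving_system +
  assumes ergodic: "\<And>A. A \<in> sets M \<Longrightarrow> T -` A \<inter> space M = A \<Longrightarrow> prob A = 0 \<or> prob A = 1"
begin

lemma AE_less_limsup_birkhoff_avg_imp_le:
  fixes f :: "'a \<Rightarrow> real"
  assumes [measurable]: "f \<in> borel_measurable M" and bound: "\<And>x. \<bar>f x\<bar> \<le> B"
  shows "AE x in M. ereal t < limsup (\<lambda>n. ereal (birkhoff_sum f n x / n)) \<longrightarrow> t \<le> integral\<^sup>L M f"
proof -
  define U where "U = {x \<in> space M. ereal t < limsup (\<lambda>n. ereal (birkhoff_sum f n x / n))}"
  have U_sets [measurable]: "U \<in> sets M"
    unfolding U_def by measurable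
  have "T -` U \<inter> space M = U"
    unfolding U_def using limsup_birkhoff_avg_comp_T[OF bound] T_in_space by auto
  then consider "prob U = 0" | "prob U = 1"
    using ergodic[OF U_sets] by blast
  then show ?thesis
  proof cases
    case 1
    then have "AE x in M. \<not> ereal t < limsup (\<lambda>n. ereal (birkhoff_sum f n x / n))"
      using prob_Collect_eq_0 U_sets unfolding U_def by simp
    then show ?thesis
      by (rule eventually_mono) simp
  next
    case 2
    then have "AE x in M. ereal t < limsup (\<lambda>n. ereal (birkhoff_sum f n x / n))"
      using prob_Collect_eq_1 U_sets unfolding U_def by simp
    then have "t \<le> integral\<^sup>L M f"
      by (rule integral_ge_if_AE_limsup_birkhoff_avg_gt[OF _ bound, rotated]) simp
    then show ?thesis
      by simp
  qed
qed

lemma AE_limsup_birkhoff_avg_le: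
  fixes f :: "'a \<Rightarrow> real"
  assumes [measurable]: "f \<in> borel_measurable M" and bound: "\<And>x. \<bar>f x\<bar> \<le> B"
  shows "AE x in M. limsup (\<lambda>n. ereal (birkhoff_sum f n x / n)) \<le> integral\<^sup>L M f"
proof -
  let ?L = "\<lambda>x. limsup (\<lambda>n. ereal (birkhoff_sum f n x / n))"
  have "AE x in M. \<forall>q\<in>\<rat>. ereal q < ?L x \<longrightarrow> q \<le> integral\<^sup>L M f"
    using AE_less_limsup_birkhoff_avg_imp_le[OF assms]
    by (simp add: AE_ball_countable countable_rat)
  then show ?thesis
  proof eventually_elim
    case (elim x)
    show ?case
    proof (rule ccontr)
      assume "\<not> ?L x \<le> integral\<^sup>L M f"
      then have "ereal (integral\<^sup>L M f) < ?L x"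
        by simp
      then obtain r where r: "ereal (integral\<^sup>L M f) < ereal r" "ereal r < ?L x"
        using ereal_dense2 by blast
      then obtain q where q: "q \<in> \<rat>" "integral\<^sup>L M f < q" "q < r"
        using Rats_dense_in_real[of "integral\<^sup>L M f" r] by auto
      then have "ereal q < ?L x"
        by (intro order.strict_trans[OF _ r(2)]) simp
      with elim q(1) have "q \<le> integral\<^sup>L M f"
        by blast
      with q(2) show False
        by simp
    qed
  qed
qed

theorem birkhoff_avg_AE_tendsto:
  fixes f :: "'a \<Rightarrow> real"
  assumes [measurable]: "f \<in> borel_measurable M" and bound: "\<And>x. \<bar>f x\<bar> \<le> B"
  shows "AE x in M. (\<lambda>n. birkhoff_sum f n x / n) \<longlonglongrightarrow> integral\<^sup>L M f"
proof -
  have "AE x in M. limsup (\<lambda>n. ereal (birkhoff_sum (\<lambda>x. - f x) n x / n)) \<le> integral\<^sup>L M (\<lambda>x. - f x)"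
    by (rule AE_limsup_birkhoff_avg_le[where B = B]) (simp_all add: bound)
  moreover have "AE x in M. limsup (\<lambda>n. ereal (birkhoff_sum f n x / n)) \<le> integral\<^sup>L M f"
    by (rule AE_limsup_birkhoff_avg_le[OF _ bound]) simp
  ultimately show ?thesis
  proof eventually_elim
    case (elim x)
    from elim(1) have "limsup (\<lambda>n. ereal (- (birkhoff_sum f n x / n))) \<le> ereal (- integral\<^sup>L M f)"
      by (simp add: birkhoff_sum_uminus)
    moreover have "liminf (\<lambda>n. ereal (birkhoff_sum f n x / n))
        = - limsup (\<lambda>n. ereal (- (birkhoff_sum f n x / n)))"
      using ereal_Liminf_uminus[of sequentially "\<lambda>n. ereal (- (birkhoff_sum f n x / n))"] by simp
    ultimately have "integral\<^sup>L M f \<le> liminf (\<lambda>n. ereal (birkhoff_sum f n x / n))"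
      by (metis ereal_minus_le_minus ereal_uminus_uminus uminus_ereal.simps(1))
    with elim(2) show ?case
      by (rule limsup_le_liminf_real)
  qed
qed

theorem birkhoff_avg_L1_tendsto:
  fixes f :: "'a \<Rightarrow> real"
  assumes [measurable]: "f \<in> borel_measurable M" and bound: "\<And>x. \<bar>f x\<bar> \<le> B"
  shows "(\<lambda>n. \<integral>x. \<bar>birkhoff_sum f n x / n - integral\<^sup>L M f\<bar> \<partial>M) \<longlonglongrightarrow> 0"
proof -
  have AE_lim: "AE x in M. (\<lambda>n. \<bar>birkhoff_sum f n x / n - integral\<^sup>L M f\<bar>) \<longlonglongrightarrow> 0"
    using birkhoff_avg_AE_tendsto[OF assms]
    by eventually_elim (intro tendsto_rabs_zero LIM_zero)
  have avg_bound: "\<bar>birkhoff_sum f n x / n - integral\<^sup>L M f\<bar> \<le> B + \<bar>integral\<^sup>L M f\<bar>" for n x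
    using birkhoff_avg_abs_le[of f B n x, OF bound] by linarith
  have "(\<lambda>n. \<integral>x. \<bar>birkhoff_sum f n x / n - integral\<^sup>L M f\<bar> \<partial>M) \<longlonglongrightarrow> (\<integral>x. 0 \<partial>M)"
    by (rule integral_dominated_convergence[OF _ _ _ AE_lim, where w = "\<lambda>_. B + \<bar>integral\<^sup>L M f\<bar>"])
      (auto intro: avg_bound[THEN order_trans])
  then show ?thesis
    by simp
qed

end

lemma ergodic_system_if_ergodic_pps:
  assumes "ergodic_pps \<mu> T"
  shows "ergodic_system \<mu> T"
proof -
  have "prob_space \<mu>" and T_meas: "T \<in> measurable \<mu> \<mu>"
    and T_pres: "\<And>A. A \<in> sets \<mu> \<Longrightarrow> measure \<mu> (T -` A \<inter> space \<mu>) = measure \<mu> A"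
    and ergodic: "\<And>A. A \<in> sets \<mu> \<Longrightarrow> T -` A \<inter> space \<mu> = A \<Longrightarrow> measure \<mu> A = 0 \<or> measure \<mu> A = 1"
    using assms unfolding ergodic_pps_def by auto
  interpret prob_space \<mu> by fact
  have "distr \<mu> \<mu> T = \<mu>"
    by (rule measure_eqI) (simp_all add: emeasure_distr[OF T_meas] emeasure_eq_measure T_pres)
  with T_meas ergodic show ?thesis
    by unfold_locales auto
qed

section \<open>Decorrelation of asymptotically invariant observables\<close>

definition covariance :: "'a measure \<Rightarrow> ('a \<Rightarrow> real) \<Rightarrow> ('a \<Rightarrow> real) \<Rightarrow> real" where
  "covariance M g F = (\<integral>x. g x * F x \<partial>M) - integral\<^sup>L M g * integral\<^sup>L M F"

lemma (in prob_space) abs_covariance_diff_le: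
  fixes h G F :: "'a \<Rightarrow> real"
  assumes h: "integrable M h" and G: "integrable M G"
    and [measurable]: "F \<in> borel_measurable M" and F_bound: "\<And>x. \<bar>F x\<bar> \<le> 1"
  shows "\<bar>covariance M h F - covariance M G F\<bar> \<le> 2 * (\<integral>x. \<bar>h x - G x\<bar> \<partial>M)"
proof -
  have int_hG: "integrable M (\<lambda>x. h x - G x)"
    using h G by simp
  have int_mult: "integrable M (\<lambda>x. g x * F x)" if "integrable M g" for g
  proof (rule Bochner_Integration.integrable_bound[OF that])
    show "(\<lambda>x. g x * F x) \<in> borel_measurable M"
      by (rule borel_measurable_times[OF borel_measurable_integrable[OF that]]) measurable
    show "AE x in M. norm (g x * F x) \<le> norm (g x)"
      using abs_mult_le_if_abs_le_one[OF F_bound] by simp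
  qed
  have F_le: "\<bar>integral\<^sup>L M F\<bar> \<le> 1"
    using abs_integral_le_integral[of M "\<lambda>_. 1" F] F_bound by (simp add: prob_space)
  have "covariance M h F - covariance M G F
      = (\<integral>x. (h x - G x) * F x \<partial>M) - (\<integral>x. h x - G x \<partial>M) * integral\<^sup>L M F"
    using int_mult[OF h] int_mult[OF G] h G by (simp add: covariance_def left_diff_distrib)
  also have "\<bar>\<dots>\<bar> \<le> (\<integral>x. \<bar>h x - G x\<bar> \<partial>M) + (\<integral>x. \<bar>h x - G x\<bar> \<partial>M) * 1"
  proof (rule order_trans[OF abs_triangle_ineq4 add_mono])
    show "\<bar>\<integral>x. (h x - G x) * F x \<partial>M\<bar> \<le> (\<integral>x. \<bar>h x - G x\<bar> \<partial>M)"
      by (rule abs_integral_mult_le[OF int_hG _ F_bound]) simp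
    show "\<bar>(\<integral>x. h x - G x \<partial>M) * integral\<^sup>L M F\<bar> \<le> (\<integral>x. \<bar>h x - G x\<bar> \<partial>M) * 1"
      unfolding abs_mult by (intro mult_mono F_le integral_abs_bound) simp_all
  qed
  finally show ?thesis
    by simp
qed

context measure_preserving_system
begin

lemma integral_comp_funpow_Suc_mult_diff_le:
  fixes F G :: "'a \<Rightarrow> real"
  assumes [measurable]: "F \<in> borel_measurable M" "G \<in> borel_measurable M"
    and F_bound: "\<And>x. \<bar>F x\<bar> \<le> 1" and G_bound: "\<And>x. \<bar>G x\<bar> \<le> C"
  shows "\<bar>(\<integral>x. G ((T ^^ Suc k) x) * F x \<partial>M) - (\<integral>x. G ((T ^^ k) x) * F x \<partial>M)\<bar>
    \<le> C * (\<integral>x. \<bar>F (T x) - F x\<bar> \<partial>M)"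
proof -
  have GF_bound: "\<bar>G y * F z\<bar> \<le> C" for y z
    using order_trans[OF abs_mult_le_if_abs_le_one[OF F_bound] G_bound] .
  have [measurable]: "(\<lambda>x. (T ^^ k) (T x)) \<in> measurable M M"
    by (rule measurable_compose[OF T_measurable measurable_compose_n[OF T_measurable]])
  have "integrable M (\<lambda>x. G ((T ^^ k) (T x)) * F x)"
    by (intro integrable_bounded[where B = C]) (simp_all add: GF_bound)
  moreover have "integrable M (\<lambda>x. G ((T ^^ k) (T x)) * F (T x))"
    by (intro integrable_bounded[where B = C]) (simp_all add: GF_bound)
  moreover have "(\<integral>x. G ((T ^^ k) x) * F x \<partial>M) = (\<integral>x. G ((T ^^ k) (T x)) * F (T x) \<partial>M)"
    by (rule integral_comp_T[symmetric]) simp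
  ultimately have "(\<integral>x. G ((T ^^ Suc k) x) * F x \<partial>M) - (\<integral>x. G ((T ^^ k) x) * F x \<partial>M)
      = (\<integral>x. G ((T ^^ k) (T x)) * F x - G ((T ^^ k) (T x)) * F (T x) \<partial>M)"
    by (simp add: funpow_Suc_right del: funpow.simps)
  also have "\<bar>\<dots>\<bar> \<le> (\<integral>x. C * \<bar>F (T x) - F x\<bar> \<partial>M)"
  proof (rule abs_integral_le_integral)
    have "\<bar>\<bar>F (T x) - F x\<bar>\<bar> \<le> 2" for x
      using F_bound[of x] F_bound[of "T x"] by (auto simp: abs_le_iff)
    then show "integrable M (\<lambda>x. C * \<bar>F (T x) - F x\<bar>)"
      by (intro integrable_mult_right integrable_bounded[where B = 2]) simp_all
    show "\<bar>G ((T ^^ k) (T x)) * F x - G ((T ^^ k) (T x)) * F (T x)\<bar> \<le> C * \<bar>F (T x) - F x\<bar>" for x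
      using mult_right_mono[OF G_bound abs_ge_zero[of "F (T x) - F x"]]
      by (simp add: abs_mult right_diff_distrib[symmetric] abs_minus_commute)
  qed
  finally show ?thesis
    by simp
qed

lemma integral_comp_funpow_mult_diff_le:
  fixes F G :: "'a \<Rightarrow> real"
  assumes "F \<in> borel_measurable M" "G \<in> borel_measurable M"
    and "\<And>x. \<bar>F x\<bar> \<le> 1" and "\<And>x. \<bar>G x\<bar> \<le> C"
  shows "\<bar>(\<integral>x. G ((T ^^ k) x) * F x \<partial>M) - (\<integral>x. G x * F x \<partial>M)\<bar>
    \<le> k * C * (\<integral>x. \<bar>F (T x) - F x\<bar> \<partial>M)"
proof (induction k)
  case 0
  then show ?case
    by simp
next
  case (Suc k)
  with integral_comp_funpow_Suc_mult_diff_le[OF assms, of k] show ?case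
    by (simp add: algebra_simps)
qed

lemma integral_birkhoff_avg_mult_diff_le:
  fixes F G :: "'a \<Rightarrow> real"
  assumes [measurable]: "F \<in> borel_measurable M" "G \<in> borel_measurable M"
    and F_bound: "\<And>x. \<bar>F x\<bar> \<le> 1" and G_bound: "\<And>x. \<bar>G x\<bar> \<le> C" and "0 < n"
  shows "\<bar>(\<integral>x. birkhoff_sum G n x / n * F x \<partial>M) - (\<integral>x. G x * F x \<partial>M)\<bar>
    \<le> n * C * (\<integral>x. \<bar>F (T x) - F x\<bar> \<partial>M)"
proof -
  define \<delta> where "\<delta> = (\<integral>x. \<bar>F (T x) - F x\<bar> \<partial>M)"
  define d where "d k = (\<integral>x. G ((T ^^ k) x) * F x \<partial>M) - (\<integral>x. G x * F x \<partial>M)" for k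
  have "\<bar>G y * F z\<bar> \<le> C" for y z
    using order_trans[OF abs_mult_le_if_abs_le_one[OF F_bound] G_bound] .
  then have int_GF: "integrable M (\<lambda>x. G ((T ^^ k) x) * F x)" for k
    by (intro integrable_bounded[where B = C]) simp_all
  have "(\<integral>x. birkhoff_sum G n x / n * F x \<partial>M) = (\<Sum>k<n. \<integral>x. G ((T ^^ k) x) * F x \<partial>M) / n"
    by (simp add: birkhoff_sum_def sum_distrib_right int_GF)
  then have "(\<integral>x. birkhoff_sum G n x / n * F x \<partial>M) - (\<integral>x. G x * F x \<partial>M) = (\<Sum>k<n. d k) / n"
    using \<open>0 < n\<close> by (simp add: d_def sum_subtractf field_simps)
  also have "\<bar>\<dots>\<bar> \<le> (\<Sum>k<n. n * C * \<delta>) / n"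
  proof -
    have "C \<ge> 0" "\<delta> \<ge> 0"
      using order_trans[OF abs_ge_zero G_bound] by (auto simp: \<delta>_def)
    have "\<bar>d k\<bar> \<le> n * C * \<delta>" if "k < n" for k
    proof -
      have "\<bar>d k\<bar> \<le> k * C * \<delta>"
        unfolding d_def \<delta>_def
        by (rule integral_comp_funpow_mult_diff_le[OF assms(1,2) F_bound G_bound])
      also have "\<dots> \<le> n * C * \<delta>"
        using that \<open>C \<ge> 0\<close> \<open>\<delta> \<ge> 0\<close> by (intro mult_right_mono) auto
      finally show ?thesis .
    qed
    then show ?thesis
      unfolding abs_divide abs_of_nat
      by (intro divide_right_mono order_trans[OF sum_abs sum_mono]) auto
  qed
  finally show ?thesis
    using \<open>0 < n\<close> by (simp add: \<delta>_def)
qed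


text \<open>Near-invariance of \<open>F\<close> lets \<open>G\<close> be replaced by its Birkhoff averages.\<close>
lemma abs_covariance_le:
  fixes F G :: "'a \<Rightarrow> real"
  assumes [measurable]: "F \<in> borel_measurable M" "G \<in> borel_measurable M"
    and F_bound: "\<And>x. \<bar>F x\<bar> \<le> 1" and G_bound: "\<And>x. \<bar>G x\<bar> \<le> C" and "0 < n"
  shows "\<bar>covariance M G F\<bar>
    \<le> n * C * (\<integral>x. \<bar>F (T x) - F x\<bar> \<partial>M) + (\<integral>x. \<bar>birkhoff_sum G n x / n - integral\<^sup>L M G\<bar> \<partial>M)"
proof -
  let ?A = "\<lambda>x. birkhoff_sum G n x / n"
  have "\<bar>?A x - integral\<^sup>L M G\<bar> \<le> C + \<bar>integral\<^sup>L M G\<bar>" for x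
    using birkhoff_avg_abs_le[of G C n x, OF G_bound] by linarith
  then have int_A: "integrable M (\<lambda>x. ?A x - integral\<^sup>L M G)"
    by (intro integrable_bounded) simp_all
  have "\<bar>?A x * F y\<bar> \<le> C" for x y
    using order_trans[OF abs_mult_le_if_abs_le_one[OF F_bound]
        birkhoff_avg_abs_le[of G C n x, OF G_bound]] .
  then have int_AF: "integrable M (\<lambda>x. ?A x * F x)"
    by (intro integrable_bounded[where B = C]) simp_all
  have int_F: "integrable M F"
    by (rule integrable_bounded[OF _ F_bound]) simp
  have "covariance M G F
      = ((\<integral>x. G x * F x \<partial>M) - (\<integral>x. ?A x * F x \<partial>M)) + (\<integral>x. (?A x - integral\<^sup>L M G) * F x \<partial>M)"
    using int_AF int_F by (simp add: covariance_def left_diff_distrib)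
  also have "\<bar>\<dots>\<bar> \<le> n * C * (\<integral>x. \<bar>F (T x) - F x\<bar> \<partial>M) + (\<integral>x. \<bar>?A x - integral\<^sup>L M G\<bar> \<partial>M)"
  proof (rule order_trans[OF abs_triangle_ineq add_mono])
    show "\<bar>(\<integral>x. G x * F x \<partial>M) - (\<integral>x. ?A x * F x \<partial>M)\<bar> \<le> n * C * (\<integral>x. \<bar>F (T x) - F x\<bar> \<partial>M)"
      using integral_birkhoff_avg_mult_diff_le[OF assms] by (simp add: abs_minus_commute)
    show "\<bar>\<integral>x. (?A x - integral\<^sup>L M G) * F x \<partial>M\<bar> \<le> (\<integral>x. \<bar>?A x - integral\<^sup>L M G\<bar> \<partial>M)"
      by (rule abs_integral_mult_le[OF int_A _ F_bound]) simp
  qed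
  finally show ?thesis .
qed

end

context ergodic_system
begin

lemma covariance_asympt_invariant_tendsto_bounded:
  fixes G :: "'a \<Rightarrow> real" and F :: "nat \<Rightarrow> 'a \<Rightarrow> real"
  assumes [measurable]: "G \<in> borel_measurable M" "\<And>l. F l \<in> borel_measurable M"
    and G_bound: "\<And>x. \<bar>G x\<bar> \<le> C" and F_bound: "\<And>l x. \<bar>F l x\<bar> \<le> 1"
    and F_asympt_inv: "(\<lambda>l. \<integral>x. \<bar>F l (T x) - F l x\<bar> \<partial>M) \<longlonglongrightarrow> 0"
  shows "(\<lambda>l. covariance M G (F l)) \<longlonglongrightarrow> 0"
proof (rule tendsto_zero_if_approximable)
  fix \<epsilon> :: real
  assume "0 < \<epsilon>"
  obtain N where N: "\<forall>n\<ge>N. (\<integral>x. \<bar>birkhoff_sum G n x / n - integral\<^sup>L M G\<bar> \<partial>M) < \<epsilon>"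
    using order_tendstoD(2)[OF birkhoff_avg_L1_tendsto[of G C, OF _ G_bound] \<open>0 < \<epsilon>\<close>]
    by (auto simp: eventually_sequentially)
  define n where "n = Suc N"
  have "(\<lambda>l. n * C * (\<integral>x. \<bar>F l (T x) - F l x\<bar> \<partial>M)) \<longlonglongrightarrow> 0"
    using tendsto_mult_right_zero[OF F_asympt_inv] .
  moreover have "\<bar>covariance M G (F l)\<bar> \<le> \<bar>n * C * (\<integral>x. \<bar>F l (T x) - F l x\<bar> \<partial>M)\<bar> + \<epsilon>" for l
  proof -
    have "\<bar>covariance M G (F l)\<bar>
        \<le> n * C * (\<integral>x. \<bar>F l (T x) - F l x\<bar> \<partial>M) + (\<integral>x. \<bar>birkhoff_sum G n x / n - integral\<^sup>L M G\<bar> \<partial>M)"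
      by (rule abs_covariance_le[OF _ _ F_bound[of l] G_bound]) (simp_all add: n_def)
    moreover have "(\<integral>x. \<bar>birkhoff_sum G n x / n - integral\<^sup>L M G\<bar> \<partial>M) < \<epsilon>"
      using N[rule_format, of n] by (simp add: n_def)
    ultimately show ?thesis
      by linarith
  qed
  ultimately show "\<exists>y. y \<longlonglongrightarrow> 0 \<and> (\<forall>l. \<bar>covariance M G (F l)\<bar> \<le> \<bar>y l\<bar> + \<epsilon>)"
    by blast
qed

theorem covariance_asympt_invariant_tendsto:
  fixes h :: "'a \<Rightarrow> real" and F :: "nat \<Rightarrow> 'a \<Rightarrow> real"
  assumes h: "integrable M h" and F_meas [measurable]: "\<And>l. F l \<in> borel_measurable M"
    and F_bound: "\<And>l x. \<bar>F l x\<bar> \<le> 1"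
    and F_asympt_inv: "(\<lambda>l. \<integral>x. \<bar>F l (T x) - F l x\<bar> \<partial>M) \<longlonglongrightarrow> 0"
  shows "(\<lambda>l. covariance M h (F l)) \<longlonglongrightarrow> 0"
proof (rule tendsto_zero_if_approximable)
  fix \<epsilon> :: real
  assume "0 < \<epsilon>"
  have [measurable]: "h \<in> borel_measurable M"
    using h by simp
  define G where "G m x = max (- real m) (min (real m) (h x))" for m x
  obtain m where m: "(\<integral>x. \<bar>h x - G m x\<bar> \<partial>M) < \<epsilon> / 2"
    using order_tendstoD(2)[OF integral_abs_diff_truncation_tendsto[OF h], of "\<epsilon> / 2"] \<open>0 < \<epsilon>\<close>
    unfolding G_def by (auto simp: eventually_sequentially)
  have G_bound: "\<bar>G m x\<bar> \<le> m" for x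
    unfolding G_def by linarith
  have [measurable]: "G m \<in> borel_measurable M"
    unfolding G_def by measurable
  then have "integrable M (G m)"
    by (rule integrable_bounded[OF _ G_bound])
  have "\<bar>covariance M h (F l)\<bar> \<le> \<bar>covariance M (G m) (F l)\<bar> + \<epsilon>" for l
    using abs_covariance_diff_le[OF h \<open>integrable M (G m)\<close> F_meas[of l] F_bound[of l]] m
      abs_triangle_ineq2[of "covariance M h (F l)" "covariance M (G m) (F l)"]
    by linarith
  moreover have "(\<lambda>l. covariance M (G m) (F l)) \<longlonglongrightarrow> 0"
    by (rule covariance_asympt_invariant_tendsto_bounded[OF _ _ G_bound F_bound F_asympt_inv])
      simp_all
  ultimately show "\<exists>y. y \<longlonglongrightarrow> 0 \<and> (\<forall>l. \<bar>covariance M h (F l)\<bar> \<le> \<bar>y l\<bar> + \<epsilon>)"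
    by blast
qed

end

section \<open>Asymptotic invariance in measure\<close>

lemma (in prob_space) integral_abs_tendsto_zero_if_in_measure:
  fixes Y :: "nat \<Rightarrow> 'a \<Rightarrow> real"
  assumes [measurable]: "\<And>l. Y l \<in> borel_measurable M" and bound: "\<And>l x. \<bar>Y l x\<bar> \<le> B"
    and in_measure: "\<And>\<eta>. 0 < \<eta> \<Longrightarrow> (\<lambda>l. prob {x \<in> space M. \<eta> < \<bar>Y l x\<bar>}) \<longlonglongrightarrow> 0"
  shows "(\<lambda>l. \<integral>x. \<bar>Y l x\<bar> \<partial>M) \<longlonglongrightarrow> 0"
proof (rule tendsto_zero_if_approximable)
  fix \<epsilon> :: real
  assume "0 < \<epsilon>"
  let ?Z = "\<lambda>l. {x \<in> space M. \<epsilon> < \<bar>Y l x\<bar>}"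
  have "(\<lambda>l. B * prob (?Z l)) \<longlonglongrightarrow> 0"
    using tendsto_mult_right_zero[OF in_measure[OF \<open>0 < \<epsilon>\<close>]] .
  moreover have "\<bar>\<integral>x. \<bar>Y l x\<bar> \<partial>M\<bar> \<le> \<bar>B * prob (?Z l)\<bar> + \<epsilon>" for l
  proof -
    have Z_sets: "?Z l \<in> sets M"
      by measurable
    have "\<bar>\<integral>x. \<bar>Y l x\<bar> \<partial>M\<bar> \<le> (\<integral>x. \<epsilon> + B * indicator (?Z l) x \<partial>M)"
    proof (rule abs_integral_le_integral)
      show "integrable M (\<lambda>x. \<epsilon> + B * indicator (?Z l) x)"
        using Z_sets by (intro Bochner_Integration.integrable_add integrable_mult_right
          integrable_real_indicator) (simp_all add: less_top[symmetric])
      show "\<bar>\<bar>Y l x\<bar>\<bar> \<le> \<epsilon> + B * indicator (?Z l) x" if "x \<in> space M" for x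
        using that bound[of l x] \<open>0 < \<epsilon>\<close> by (cases "x \<in> ?Z l") auto
    qed
    also have "\<dots> = \<epsilon> + B * prob (?Z l)"
      using Z_sets sets.sets_into_space[OF Z_sets]
      by (subst Bochner_Integration.integral_add)
        (simp_all add: integrable_real_indicator less_top[symmetric] prob_space Int_absorb2)
    finally show ?thesis
      by simp
  qed
  ultimately show "\<exists>y. y \<longlonglongrightarrow> 0 \<and> (\<forall>l. \<bar>\<integral>x. \<bar>Y l x\<bar> \<partial>M\<bar> \<le> \<bar>y l\<bar> + \<epsilon>)"
    by blast
qed

lemma compact_UNIV_countable_dense:
  assumes "compact (UNIV :: 'e set)"
  obtains D :: "'e::metric_space set" where "countable D" "\<And>y e. 0 < e \<Longrightarrow> \<exists>d\<in>D. dist y d < e"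
proof -
  have "\<forall>n::nat. \<exists>k. finite k \<and> (UNIV :: 'e set) \<subseteq> (\<Union>x\<in>k. ball x (1 / Suc n))"
    using assms unfolding compact_eq_totally_bounded by simp
  then obtain k where k: "\<And>n. finite (k n)" "\<And>n. (UNIV :: 'e set) \<subseteq> (\<Union>x\<in>k n. ball x (1 / Suc n))"
    by metis
  have "\<exists>d\<in>(\<Union>n. k n). dist y d < e" if "0 < e" for y :: 'e and e
  proof -
    obtain n :: nat where "1 / Suc n < e"
      using \<open>0 < e\<close> nat_approx_posE by blast
    moreover obtain d where "d \<in> k n" "y \<in> ball d (1 / Suc n)"
      using k(2)[of n] by blast
    ultimately show ?thesis
      by (intro bexI[of _ d]) (auto simp: dist_commute)
  qed
  moreover have "countable (\<Union>n. k n)"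
    using k(1) by (simp add: countable_finite)
  ultimately show ?thesis
    using that by blast
qed

text \<open>The type class \<open>metric_space\<close> does not provide second countability, so measurability of
  \<open>x \<mapsto> dist (f x) (g x)\<close> does not come for free; a countable dense set \<open>D\<close> gives
  \<open>dist a b = sup\<^sub>d\<^sub>\<in>\<^sub>D |dist a d - dist b d|\<close>.\<close>
lemma sets_dist_gt_if_compact:
  fixes f g :: "'a \<Rightarrow> 'e::metric_space"
  assumes "compact (UNIV :: 'e set)"
    and [measurable]: "f \<in> borel_measurable M" "g \<in> borel_measurable M"
  shows "{x \<in> space M. \<eta> < dist (f x) (g x)} \<in> sets M"
proof -
  obtain D :: "'e set" where "countable D" and D: "\<And>y e. 0 < e \<Longrightarrow> \<exists>d\<in>D. dist y d < e"
    using compact_UNIV_countable_dense[OF assms(1)] by blast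
  have [measurable]: "(\<lambda>y. dist y d) \<in> borel_measurable borel" for d :: 'e
    by (intro borel_measurable_continuous_onI continuous_intros)
  have "\<eta> < dist a b \<longleftrightarrow> (\<exists>d\<in>D. \<eta> < \<bar>dist a d - dist b d\<bar>)" for a b :: 'e
  proof
    assume "\<eta> < dist a b"
    then obtain d where "d \<in> D" "dist a d < (dist a b - \<eta>) / 2"
      using D[of "(dist a b - \<eta>) / 2" a] by auto
    moreover have "dist a b \<le> dist a d + dist b d"
      by (rule dist_triangle2)
    ultimately show "\<exists>d\<in>D. \<eta> < \<bar>dist a d - dist b d\<bar>"
      by (intro bexI[of _ d]) auto
  next
    assume "\<exists>d\<in>D. \<eta> < \<bar>dist a d - dist b d\<bar>"
    then obtain d where "\<eta> < \<bar>dist a d - dist b d\<bar>"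
      by blast
    moreover have "\<bar>dist a d - dist b d\<bar> \<le> dist a b"
      using dist_triangle[of a d b] dist_triangle[of b d a] unfolding abs_le_iff
      by (simp add: dist_commute)
    ultimately show "\<eta> < dist a b"
      by linarith
  qed
  then have "{x \<in> space M. \<eta> < dist (f x) (g x)}
      = {x \<in> space M. \<exists>d\<in>D. \<eta> < \<bar>dist (f x) d - dist (g x) d\<bar>}"
    by simp
  also have "\<dots> \<in> sets M"
    using \<open>countable D\<close> by measurable
  finally show ?thesis .
qed

lemma (in measure_preserving_system) integral_abs_lipschitz_diff_tendsto_zero:
  fixes R :: "nat \<Rightarrow> 'a \<Rightarrow> 'e::metric_space" and c :: "'e \<Rightarrow> real"
  assumes "compact (UNIV :: 'e set)" and [measurable]: "\<And>l. R l \<in> borel_measurable M"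
    and R_inv: "asympt_inv_in_measure M T R"
    and c_lipschitz: "L-lipschitz_on UNIV c" and c_bound: "\<And>y. \<bar>c y\<bar> \<le> B"
  shows "(\<lambda>l. \<integral>x. \<bar>c (R l (T x)) - c (R l x)\<bar> \<partial>M) \<longlonglongrightarrow> 0"
proof (rule integral_abs_tendsto_zero_if_in_measure)
  have [measurable]: "c \<in> borel_measurable borel"
    by (intro borel_measurable_continuous_onI lipschitz_on_continuous_on[OF c_lipschitz])
  show "(\<lambda>x. c (R l (T x)) - c (R l x)) \<in> borel_measurable M" for l
    by measurable
  show "\<bar>c (R l (T x)) - c (R l x)\<bar> \<le> 2 * B" for l x
    using c_bound[of "R l (T x)"] c_bound[of "R l x"] by linarith
  fix \<eta> :: real
  assume "0 < \<eta>"
  have "0 \<le> L"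
    using c_lipschitz by (rule lipschitz_on_nonneg)
  let ?Z = "\<lambda>l. {x \<in> space M. \<eta> / (L + 1) < dist (R l (T x)) (R l x)}"
  have Z_sets: "?Z l \<in> sets M" for l
    using assms(1) by (rule sets_dist_gt_if_compact) measurable
  have "\<eta> / (L + 1) < dist a b" if "\<eta> < \<bar>c a - c b\<bar>" for a b
  proof -
    have "\<eta> < L * dist a b"
      using that lipschitz_onD[OF c_lipschitz, of a b] by (simp add: dist_real_def)
    also have "\<dots> \<le> (L + 1) * dist a b"
      by (simp add: distrib_right)
    finally show ?thesis
      using \<open>0 \<le> L\<close> by (simp add: divide_less_eq mult.commute)
  qed
  then have "\<forall>l. norm (prob {x \<in> space M. \<eta> < \<bar>c (R l (T x)) - c (R l x)\<bar>}) \<le> prob (?Z l)"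
    by (simp, intro allI finite_measure_mono Z_sets) auto
  moreover have "(\<lambda>l. prob (?Z l)) \<longlonglongrightarrow> 0"
    using R_inv \<open>0 \<le> L\<close> \<open>0 < \<eta>\<close> unfolding asympt_inv_in_measure_def by simp
  ultimately show "(\<lambda>l. prob {x \<in> space M. \<eta> < \<bar>c (R l (T x)) - c (R l x)\<bar>}) \<longlonglongrightarrow> 0"
    by (rule Lim_null_comparison[OF always_eventually])
qed

section \<open>Densities and total variation\<close>

lemma probs_ac_density:
  assumes "prob_space \<mu>" and "\<nu> \<in> probs_ac \<mu>"
  obtains h :: "'a \<Rightarrow> real" where "h \<in> borel_measurable \<mu>" "\<And>x. 0 \<le> h x" "integrable \<mu> h"
    "integral\<^sup>L \<mu> h = 1" "\<nu> = density \<mu> (\<lambda>x. ennreal (h x))"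
proof -
  interpret prob_space \<mu> by fact
  have sets_eq: "sets \<nu> = sets \<mu>" and ac: "absolutely_continuous \<mu> \<nu>" and "prob_space \<nu>"
    using assms(2) unfolding probs_ac_def by auto
  interpret \<nu>: prob_space \<nu> by fact
  define h where "h x = enn2real (RN_deriv \<mu> \<nu> x)" for x
  have [measurable]: "h \<in> borel_measurable \<mu>"
    unfolding h_def by measurable
  have "AE x in \<mu>. RN_deriv \<mu> \<nu> x \<noteq> \<infinity>"
    using RN_deriv_finite[OF \<nu>.sigma_finite_measure_axioms ac sets_eq] .
  then have "density \<mu> (\<lambda>x. ennreal (h x)) = density \<mu> (RN_deriv \<mu> \<nu>)"
    by (intro density_cong) (auto simp: h_def less_top elim: AE_mp)
  also have "\<dots> = \<nu>"
    by (rule density_RN_deriv[OF ac sets_eq])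
  finally have \<nu>_eq: "\<nu> = density \<mu> (\<lambda>x. ennreal (h x))" ..
  have h_nonneg: "0 \<le> h x" for x
    by (simp add: h_def)
  have "integrable \<nu> (\<lambda>_. 1::real)"
    by simp
  then have "integrable \<mu> h"
    unfolding \<nu>_eq by (simp add: integrable_real_density h_nonneg)
  have "integral\<^sup>L \<mu> h = (\<integral>_. 1 \<partial>\<nu>)"
    unfolding \<nu>_eq by (subst integral_real_density) (simp_all add: h_nonneg)
  also have "\<dots> = 1"
    by (simp add: \<nu>.prob_space)
  finally have "integral\<^sup>L \<mu> h = 1" .
  show ?thesis
    by (rule that[OF _ h_nonneg \<open>integrable \<mu> h\<close> \<open>integral\<^sup>L \<mu> h = 1\<close> \<nu>_eq]) simp
qed

lemma measure_density_real:
  fixes h :: "'a \<Rightarrow> real"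
  assumes [measurable]: "h \<in> borel_measurable \<mu>" "C \<in> sets \<mu>" and "\<And>x. 0 \<le> h x"
  shows "measure (density \<mu> (\<lambda>x. ennreal (h x))) C = (\<integral>x. h x * indicator C x \<partial>\<mu>)"
proof -
  have "measure (density \<mu> (\<lambda>x. ennreal (h x))) C
      = (\<integral>x. indicator C x \<partial>density \<mu> (\<lambda>x. ennreal (h x)))"
    using sets.sets_into_space[OF assms(2)] by (simp add: Int_absorb2)
  also have "\<dots> = (\<integral>x. h x * indicator C x \<partial>\<mu>)"
    using assms(3) by (intro integral_real_density) simp_all
  finally show ?thesis .
qed

lemma abs_measure_diff_le_SUP:
  assumes "prob_space \<nu>" "prob_space \<nu>'" "A \<in> sets \<mu>"
  shows "\<bar>measure \<nu> A - measure \<nu>' A\<bar> \<le> (SUP B\<in>sets \<mu>. \<bar>measure \<nu> B - measure \<nu>' B\<bar>)"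
proof (rule cSUP_upper[OF assms(3)])
  have "\<bar>measure \<nu> B - measure \<nu>' B\<bar> \<le> 1" for B
    using prob_space.prob_le_1[OF assms(1), of B] prob_space.prob_le_1[OF assms(2), of B]
      measure_nonneg[of \<nu> B] measure_nonneg[of \<nu>' B]
    unfolding abs_le_iff by linarith
  then show "bdd_above ((\<lambda>B. \<bar>measure \<nu> B - measure \<nu>' B\<bar>) ` sets \<mu>)"
    by (intro bdd_aboveI2)
qed

text \<open>Splitting along \<open>A = {h' < h}\<close> gives
  \<open>\<integral>|h - h'| = (\<nu> A - \<nu>' A) + (\<nu>' A\<^sup>c - \<nu> A\<^sup>c)\<close>.\<close>
lemma integral_abs_density_diff_le_dP:
  fixes h h' :: "'a \<Rightarrow> real"
  assumes [measurable]: "h \<in> borel_measurable \<mu>" "h' \<in> borel_measurable \<mu>"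
    and h: "\<And>x. 0 \<le> h x" "integrable \<mu> h" and h': "\<And>x. 0 \<le> h' x" "integrable \<mu> h'"
    and \<nu>: "\<nu> = density \<mu> (\<lambda>x. ennreal (h x))" "prob_space \<nu>"
    and \<nu>': "\<nu>' = density \<mu> (\<lambda>x. ennreal (h' x))" "prob_space \<nu>'"
  shows "(\<integral>x. \<bar>h x - h' x\<bar> \<partial>\<mu>) \<le> dP \<mu> \<nu> \<nu>'"
proof -
  define A where "A = {x \<in> space \<mu>. h' x < h x}"
  define B where "B = space \<mu> - A"
  have [measurable]: "A \<in> sets \<mu>" "B \<in> sets \<mu>"
    unfolding A_def B_def by measurable
  have measure_\<nu>: "measure \<nu> C = (\<integral>x. h x * indicator C x \<partial>\<mu>)"
    and measure_\<nu>': "measure \<nu>' C = (\<integral>x. h' x * indicator C x \<partial>\<mu>)" if "C \<in> sets \<mu>" for C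
    unfolding \<nu>(1) \<nu>'(1) using that by (simp_all add: measure_density_real h h')
  have "(\<integral>x. \<bar>h x - h' x\<bar> \<partial>\<mu>) = (\<integral>x. h x * indicator A x - h' x * indicator A x
      + (h' x * indicator B x - h x * indicator B x) \<partial>\<mu>)"
    by (intro Bochner_Integration.integral_cong) (auto simp: A_def B_def indicator_def)
  also have "\<dots> = (measure \<nu> A - measure \<nu>' A) + (measure \<nu>' B - measure \<nu> B)"
    using h(2) h'(2) by (simp add: measure_\<nu> measure_\<nu>' integrable_real_mult_indicator)
  also have "\<dots> \<le> dP \<mu> \<nu> \<nu>'"
    using abs_measure_diff_le_SUP[OF \<nu>(2) \<nu>'(2), where A = A and \<mu> = \<mu>]
      abs_measure_diff_le_SUP[OF \<nu>(2) \<nu>'(2), where A = B and \<mu> = \<mu>]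
    unfolding dP_def by (simp add: abs_le_iff)
  finally show ?thesis .
qed

lemma abs_integral_diff_le_dP:
  fixes F :: "'a \<Rightarrow> real"
  assumes "prob_space \<mu>" "\<nu> \<in> probs_ac \<mu>" "\<nu>' \<in> probs_ac \<mu>"
    and [measurable]: "F \<in> borel_measurable \<mu>" and F_bound: "\<And>x. \<bar>F x\<bar> \<le> 1"
  shows "\<bar>(\<integral>x. F x \<partial>\<nu>) - (\<integral>x. F x \<partial>\<nu>')\<bar> \<le> dP \<mu> \<nu> \<nu>'"
proof -
  obtain h where [measurable]: "h \<in> borel_measurable \<mu>" and h: "\<And>x. 0 \<le> h x" "integrable \<mu> h"
    and "integral\<^sup>L \<mu> h = 1" and \<nu>_eq: "\<nu> = density \<mu> (\<lambda>x. ennreal (h x))"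
    using probs_ac_density[OF assms(1,2)] by blast
  obtain h' where [measurable]: "h' \<in> borel_measurable \<mu>" and h': "\<And>x. 0 \<le> h' x" "integrable \<mu> h'"
    and "integral\<^sup>L \<mu> h' = 1" and \<nu>'_eq: "\<nu>' = density \<mu> (\<lambda>x. ennreal (h' x))"
    using probs_ac_density[OF assms(1,3)] by blast
  have int_mult: "integrable \<mu> (\<lambda>x. g x * F x)" if "integrable \<mu> g" for g
    using that abs_mult_le_if_abs_le_one[OF F_bound]
    by (intro Bochner_Integration.integrable_bound[OF that] AE_I2) simp_all
  have "(\<integral>x. F x \<partial>\<nu>) - (\<integral>x. F x \<partial>\<nu>') = (\<integral>x. (h x - h' x) * F x \<partial>\<mu>)"
    using int_mult[OF h(2)] int_mult[OF h'(2)]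
    by (simp add: \<nu>_eq \<nu>'_eq integral_real_density h h' left_diff_distrib)
  also have "\<bar>\<dots>\<bar> \<le> (\<integral>x. \<bar>h x - h' x\<bar> \<partial>\<mu>)"
    using h(2) h'(2) by (intro abs_integral_mult_le F_bound) simp_all
  also have "\<dots> \<le> dP \<mu> \<nu> \<nu>'"
    using assms(2,3) unfolding probs_ac_def
    by (intro integral_abs_density_diff_le_dP h h' \<nu>_eq \<nu>'_eq) simp_all
  finally show ?thesis .
qed

section \<open>The metric \<open>D\<^sub>\<frak>E\<close>\<close>

lemma weights_sums: "(\<lambda>j. (1/2::real) ^ (j + 2) * C) sums (C / 2)"
proof -
  have "(\<lambda>j. (1/2::real) ^ j) sums 2"
    using geometric_sums[of "1/2::real"] by simp
  from sums_mult2[OF this, of "C / 4"] show ?thesis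
    by (simp add: power_add mult_ac)
qed

lemma summable_weighted:
  fixes x :: "nat \<Rightarrow> real"
  assumes "\<And>j. \<bar>x j\<bar> \<le> C"
  shows "summable (\<lambda>j. (1/2) ^ (j + 2) * x j)"
proof (rule summable_comparison_test'[where N = 0])
  show "summable (\<lambda>j. (1/2::real) ^ (j + 2) * C)"
    using weights_sums by (rule sums_summable)
  show "norm ((1/2) ^ (j + 2) * x j) \<le> (1/2) ^ (j + 2) * C" for j
    using assms[of j] by (simp add: abs_mult)
qed

definition weighted_dist :: "(nat \<Rightarrow> real) \<Rightarrow> (nat \<Rightarrow> real) \<Rightarrow> real" where
  "weighted_dist a b = (\<Sum>j. (1/2) ^ (j + 2) * \<bar>a j - b j\<bar>)"

lemma DE_eq_weighted_dist:
  "DE \<theta> Q Q' = weighted_dist (\<lambda>j. \<integral>y. chi \<theta> j y \<partial>Q) (\<lambda>j. \<integral>y. chi \<theta> j y \<partial>Q')"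
  by (simp add: DE_def weighted_dist_def)

lemma weighted_dist_commute: "weighted_dist a b = weighted_dist b a"
  by (simp add: weighted_dist_def abs_minus_commute)

lemma weighted_dist_nonneg:
  assumes "\<And>j. \<bar>a j - b j\<bar> \<le> C"
  shows "0 \<le> weighted_dist a b"
  unfolding weighted_dist_def using assms by (intro suminf_nonneg summable_weighted[of _ C]) auto

lemma weighted_dist_le:
  assumes "\<And>j. \<bar>a j - b j\<bar> \<le> C"
  shows "weighted_dist a b \<le> C / 2"
proof -
  have "weighted_dist a b \<le> (\<Sum>j. (1/2) ^ (j + 2) * C)"
    unfolding weighted_dist_def using assms
    by (intro suminf_le summable_weighted[of _ C] sums_summable[OF weights_sums] mult_left_mono)
      auto
  also have "\<dots> = C / 2"
    using weights_sums by (rule sums_unique[symmetric])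
  finally show ?thesis .
qed

lemma weighted_dist_triangle:
  assumes "\<And>j. \<bar>a j - b j\<bar> \<le> C" and "\<And>j. \<bar>b j - c j\<bar> \<le> C"
  shows "weighted_dist a c \<le> weighted_dist a b + weighted_dist b c"
proof -
  have "\<bar>a j - c j\<bar> \<le> 2 * C" for j
    using assms[of j] by linarith
  then have "weighted_dist a c
      \<le> (\<Sum>j. (1/2) ^ (j + 2) * \<bar>a j - b j\<bar> + (1/2) ^ (j + 2) * \<bar>b j - c j\<bar>)"
    unfolding weighted_dist_def using assms
    by (intro suminf_le summable_add summable_weighted[of _ "2 * C"] summable_weighted[of _ C])
      (auto simp: distrib_left[symmetric])
  also have "\<dots> = weighted_dist a b + weighted_dist b c"
    unfolding weighted_dist_def using assms
    by (intro suminf_add[symmetric] summable_weighted[of _ C]) auto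
  finally show ?thesis .
qed

lemma abs_diff_le_weighted_dist:
  assumes "\<And>j. \<bar>a j - b j\<bar> \<le> C"
  shows "\<bar>a j - b j\<bar> \<le> 2 ^ (j + 2) * weighted_dist a b"
proof -
  have "(\<Sum>i\<in>{j}. (1/2) ^ (i + 2) * \<bar>a i - b i\<bar>) \<le> weighted_dist a b"
    unfolding weighted_dist_def using assms by (intro sum_le_suminf summable_weighted[of _ C]) auto
  then show ?thesis
    by (simp add: power_divide field_simps)
qed

lemma weighted_dist_tendsto_zero:
  fixes a b :: "nat \<Rightarrow> nat \<Rightarrow> real"
  assumes bound: "\<And>l j. \<bar>a l j - b l j\<bar> \<le> C" and lim: "\<And>j. (\<lambda>l. a l j - b l j) \<longlonglongrightarrow> 0"
  shows "(\<lambda>l. weighted_dist (a l) (b l)) \<longlonglongrightarrow> 0"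
proof -
  have "(\<lambda>l. \<Sum>j. (1/2) ^ (j + 2) * \<bar>a l j - b l j\<bar>) \<longlonglongrightarrow> (\<Sum>j. 0)"
  proof (rule tannerys_theorem[THEN conjunct2, THEN conjunct2])
    show "(\<lambda>l. (1/2) ^ (j + 2) * \<bar>a l j - b l j\<bar>) \<longlonglongrightarrow> 0" for j
      using tendsto_mult_right_zero[OF tendsto_rabs_zero[OF lim]] .
    show "\<forall>\<^sub>F (j, l) in at_top \<times>\<^sub>F sequentially.
        norm ((1/2::real) ^ (j + 2) * \<bar>a l j - b l j\<bar>) \<le> (1/2) ^ (j + 2) * C"
      using bound by (intro always_eventually) (auto simp: abs_mult)
    show "summable (\<lambda>j. (1/2::real) ^ (j + 2) * C)"
      using weights_sums by (rule sums_summable)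
  qed simp
  then show ?thesis
    by (simp add: weighted_dist_def)
qed

context
  fixes \<theta> :: "nat \<Rightarrow> 'e::metric_space \<Rightarrow> real"
  assumes compact: "compact (UNIV :: 'e set)" and admissible: "admissible_seq \<theta>"
begin

lemma continuous_on_admissible: "continuous_on UNIV (\<theta> j)"
  using admissible unfolding admissible_seq_def by (metis lipschitz_on_continuous_on)

lemma bounded_continuous_on_compact:
  fixes f :: "'e \<Rightarrow> real"
  assumes "continuous_on UNIV f"
  obtains B where "\<And>y. \<bar>f y\<bar> \<le> B"
  using compact_imp_bounded[OF compact_continuous_image[OF assms compact]]
  unfolding bounded_iff by auto

lemma abs_le_SUP_abs_admissible: "\<bar>\<theta> j y\<bar> \<le> (SUP y. \<bar>\<theta> j y\<bar>)"
proof -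
  obtain B where "\<And>y. \<bar>\<theta> j y\<bar> \<le> B"
    using bounded_continuous_on_compact[OF continuous_on_admissible] by blast
  then show ?thesis
    by (intro cSUP_upper bdd_aboveI2) auto
qed

lemma abs_chi_le_1: "\<bar>chi \<theta> j y\<bar> \<le> 1"
proof -
  have "\<bar>\<theta> j y\<bar> \<le> (SUP y. \<bar>\<theta> j y\<bar>)"
    by (rule abs_le_SUP_abs_admissible)
  moreover from this have "0 \<le> (SUP y. \<bar>\<theta> j y\<bar>)"
    by (rule order_trans[OF abs_ge_zero])
  ultimately show ?thesis
    by (auto simp: chi_def abs_divide divide_le_eq_1)
qed

text \<open>This also holds when \<open>sup |\<theta> j| = 0\<close>, where \<open>chi \<theta> j = 0\<close> because \<open>x / 0 = 0\<close>.\<close>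
lemma admissible_eq_SUP_mult_chi: "\<theta> j y = (SUP y. \<bar>\<theta> j y\<bar>) * chi \<theta> j y"
  using abs_le_SUP_abs_admissible[of j y]
  by (cases "(SUP y. \<bar>\<theta> j y\<bar>) = 0") (simp_all add: chi_def)

lemma lipschitz_chi: "\<exists>L. L-lipschitz_on UNIV (chi \<theta> j)"
proof -
  obtain L where "L-lipschitz_on UNIV (\<theta> j)"
    using admissible unfolding admissible_seq_def by blast
  from lipschitz_on_cmult_real[OF this, of "inverse (SUP y. \<bar>\<theta> j y\<bar>)"] show ?thesis
    unfolding chi_def by (auto simp: divide_inverse_commute)
qed

lemma continuous_on_chi: "continuous_on UNIV (chi \<theta> j)"
  using lipschitz_chi lipschitz_on_continuous_on by blast

lemma integrable_continuous_on_compact: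
  fixes f :: "'e \<Rightarrow> real"
  assumes "prob_space Q" "sets Q = sets borel" and "continuous_on UNIV f"
  shows "integrable Q f"
proof -
  obtain B where "\<And>y. \<bar>f y\<bar> \<le> B"
    using bounded_continuous_on_compact[OF assms(3)] by blast
  moreover have "f \<in> borel_measurable Q"
    unfolding measurable_cong_sets[OF assms(2) refl]
    by (rule borel_measurable_continuous_onI[OF assms(3)])
  ultimately show ?thesis
    by (intro finite_measure.integrable_const_bound[where B = B] prob_space.finite_measure assms(1))
      auto
qed

lemma abs_integral_chi_le_1:
  assumes "prob_space N"
  shows "\<bar>\<integral>y. chi \<theta> j y \<partial>N\<bar> \<le> 1"
proof -
  interpret prob_space N by fact
  have "\<bar>\<integral>y. chi \<theta> j y \<partial>N\<bar> \<le> (\<integral>y. 1 \<partial>N)"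
    by (rule abs_integral_le_integral) (simp_all add: abs_chi_le_1)
  then show ?thesis
    by (simp add: prob_space)
qed

lemma integral_admissible_diff_tendsto_if_DE:
  fixes Q Q' :: "nat \<Rightarrow> 'e measure"
  assumes "\<And>l. prob_space (Q l)" "\<And>l. prob_space (Q' l)"
    and DE_lim: "(\<lambda>l. DE \<theta> (Q l) (Q' l)) \<longlonglongrightarrow> 0"
  shows "(\<lambda>l. (\<integral>y. \<theta> j y \<partial>Q l) - (\<integral>y. \<theta> j y \<partial>Q' l)) \<longlonglongrightarrow> 0"
proof -
  have chi_diff_bound: "\<bar>(\<integral>y. chi \<theta> j y \<partial>Q l) - (\<integral>y. chi \<theta> j y \<partial>Q' l)\<bar> \<le> 2" for j l
    using abs_integral_chi_le_1[OF assms(1), of l j] abs_integral_chi_le_1[OF assms(2), of l j]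
    by linarith
  have chi_lim: "(\<lambda>l. (\<integral>y. chi \<theta> j y \<partial>Q l) - (\<integral>y. chi \<theta> j y \<partial>Q' l)) \<longlonglongrightarrow> 0"
  proof (rule Lim_null_comparison[OF always_eventually])
    show "\<forall>l. norm ((\<integral>y. chi \<theta> j y \<partial>Q l) - (\<integral>y. chi \<theta> j y \<partial>Q' l)) \<le> 2 ^ (j + 2) * DE \<theta> (Q l) (Q' l)"
      unfolding DE_eq_weighted_dist real_norm_def
      by (intro allI abs_diff_le_weighted_dist[where C = 2] chi_diff_bound)
    show "(\<lambda>l. 2 ^ (j + 2) * DE \<theta> (Q l) (Q' l)) \<longlonglongrightarrow> 0"
      using tendsto_mult_right_zero[OF DE_lim] .
  qed
  define S where "S = (SUP y. \<bar>\<theta> j y\<bar>)"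
  have "\<theta> j = (\<lambda>y. S * chi \<theta> j y)"
    unfolding S_def by (rule ext) (rule admissible_eq_SUP_mult_chi)
  then show ?thesis
    using tendsto_mult_right_zero[where c = S, OF chi_lim] by (simp add: right_diff_distrib)
qed

lemma integral_diff_tendsto_if_DE:
  fixes Q Q' :: "nat \<Rightarrow> 'e measure" and f :: "'e \<Rightarrow> real"
  assumes Q: "\<And>l. prob_space (Q l)" "\<And>l. sets (Q l) = sets borel"
    and Q': "\<And>l. prob_space (Q' l)" "\<And>l. sets (Q' l) = sets borel"
    and DE_lim: "(\<lambda>l. DE \<theta> (Q l) (Q' l)) \<longlonglongrightarrow> 0" and f: "continuous_on UNIV f"
  shows "(\<lambda>l. (\<integral>y. f y \<partial>Q l) - (\<integral>y. f y \<partial>Q' l)) \<longlonglongrightarrow> 0"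
proof (rule tendsto_zero_if_approximable)
  fix \<epsilon> :: real
  assume "0 < \<epsilon>"
  then obtain j where j: "\<And>y. \<bar>f y - \<theta> j y\<bar> < \<epsilon> / 2"
    using admissible f half_gt_zero[OF \<open>0 < \<epsilon>\<close>] unfolding admissible_seq_def by blast
  have close: "\<bar>(\<integral>y. f y \<partial>N) - (\<integral>y. \<theta> j y \<partial>N)\<bar> \<le> \<epsilon> / 2"
    if "prob_space N" "sets N = sets borel" for N
  proof -
    interpret prob_space N
      by (fact that(1))
    have "\<bar>\<integral>y. f y - \<theta> j y \<partial>N\<bar> \<le> (\<integral>y. \<epsilon> / 2 \<partial>N)"
      using j by (intro abs_integral_le_integral less_imp_le) simp_all
    then show ?thesis
      using integrable_continuous_on_compact[OF that f]
        integrable_continuous_on_compact[OF that continuous_on_admissible]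
      by (simp add: prob_space)
  qed
  have "\<bar>(\<integral>y. f y \<partial>Q l) - (\<integral>y. f y \<partial>Q' l)\<bar>
      \<le> \<bar>(\<integral>y. \<theta> j y \<partial>Q l) - (\<integral>y. \<theta> j y \<partial>Q' l)\<bar> + \<epsilon>" for l
    using close[OF Q(1,2)[of l]] close[OF Q'(1,2)[of l]] by linarith
  with integral_admissible_diff_tendsto_if_DE[OF Q(1) Q'(1) DE_lim]
  show "\<exists>y. y \<longlonglongrightarrow> 0 \<and> (\<forall>l. \<bar>(\<integral>y. f y \<partial>Q l) - (\<integral>y. f y \<partial>Q' l)\<bar> \<le> \<bar>y l\<bar> + \<epsilon>)"
    by blast
qed

lemma weak_conv_law_if_DE_tendsto:
  fixes Q Q' :: "nat \<Rightarrow> 'e measure"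
  assumes "\<And>l. prob_space (Q l)" "\<And>l. sets (Q l) = sets borel"
    and "\<And>l. prob_space (Q' l)" "\<And>l. sets (Q' l) = sets borel"
    and "(\<lambda>l. DE \<theta> (Q l) (Q' l)) \<longlonglongrightarrow> 0" and weak: "weak_conv_law Q' P"
  shows "weak_conv_law Q P"
  unfolding weak_conv_law_def
proof (intro allI impI)
  fix f :: "'e \<Rightarrow> real"
  assume f: "continuous_on UNIV f" "bounded (range f)"
  with weak have "(\<lambda>l. \<integral>y. f y \<partial>Q' l) \<longlonglongrightarrow> (\<integral>y. f y \<partial>P)"
    unfolding weak_conv_law_def by blast
  from tendsto_add[OF integral_diff_tendsto_if_DE[OF assms(1-5) f(1)] this]
  show "(\<lambda>l. \<integral>y. f y \<partial>Q l) \<longlonglongrightarrow> (\<integral>y. f y \<partial>P)"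
    by simp
qed

end

section \<open>Uniformity over compact sets of measures\<close>

lemma uniformly_tendsto_zero_if_seq_compact:
  fixes g :: "nat \<Rightarrow> 'b \<Rightarrow> real" and d :: "'b \<Rightarrow> 'b \<Rightarrow> real"
  assumes lim: "\<And>x. x \<in> K \<Longrightarrow> (\<lambda>l. g l x) \<longlonglongrightarrow> 0"
    and equicontinuous: "\<And>l x y. x \<in> K \<Longrightarrow> y \<in> K \<Longrightarrow> g l x \<le> g l y + d x y"
    and seq_compact: "\<And>s :: nat \<Rightarrow> 'b. (\<forall>n. s n \<in> K) \<Longrightarrow>
      \<exists>r y. strict_mono r \<and> y \<in> K \<and> (\<lambda>n. d (s (r n)) y) \<longlonglongrightarrow> 0"
    and "0 < \<epsilon>"
  shows "\<forall>\<^sub>F l in sequentially. \<forall>x\<in>K. g l x < \<epsilon>"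
proof (rule ccontr)
  assume "\<not> ?thesis"
  then have "\<exists>\<^sub>F l in sequentially. \<exists>x\<in>K. \<epsilon> \<le> g l x"
    by (simp add: not_eventually not_less)
  then have "infinite {l. \<exists>x\<in>K. \<epsilon> \<le> g l x}"
    unfolding cofinite_eq_sequentially[symmetric] frequently_cofinite .
  then obtain \<sigma> :: "nat \<Rightarrow> nat" where "strict_mono \<sigma>" and "\<forall>n. \<exists>x. x \<in> K \<and> \<epsilon> \<le> g (\<sigma> n) x"
    using infinite_enumerate by force
  then obtain s where s: "\<And>n. s n \<in> K" "\<And>n. \<epsilon> \<le> g (\<sigma> n) (s n)"
    by (metis choice)
  have "\<forall>n. s n \<in> K"
    using s(1) by blast
  from seq_compact[OF this] obtain r y
    where "strict_mono r" "y \<in> K" and d_lim: "(\<lambda>n. d (s (r n)) y) \<longlonglongrightarrow> 0"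
    by blast
  have "(\<lambda>n. g (\<sigma> (r n)) y) \<longlonglongrightarrow> 0"
    using LIMSEQ_subseq_LIMSEQ[OF lim[OF \<open>y \<in> K\<close>] strict_mono_o[OF \<open>strict_mono \<sigma>\<close> \<open>strict_mono r\<close>]]
    by (simp add: comp_def)
  from order_tendstoD(2)[OF tendsto_add[OF this d_lim]] \<open>0 < \<epsilon>\<close>
  obtain n where "g (\<sigma> (r n)) y + d (s (r n)) y < \<epsilon>"
    unfolding eventually_sequentially by auto
  moreover have "\<epsilon> \<le> g (\<sigma> (r n)) y + d (s (r n)) y"
    using s(2)[of "r n"] equicontinuous[OF s(1)[of "r n"] \<open>y \<in> K\<close>, of "\<sigma> (r n)"] by linarith
  ultimately show False
    by linarith
qed

locale asympt_invariant_observables = ergodic_system M T for M :: "'a measure" and T +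
  fixes R :: "nat \<Rightarrow> 'a \<Rightarrow> 'e::metric_space" and \<theta> :: "nat \<Rightarrow> 'e \<Rightarrow> real"
  assumes compact_space: "compact (UNIV :: 'e set)"
    and R_measurable [measurable]: "\<And>l. R l \<in> borel_measurable M"
    and R_asympt_inv: "asympt_inv_in_measure M T R"
    and admissible: "admissible_seq \<theta>"
begin

lemma M_in_probs_ac: "M \<in> probs_ac M"
  unfolding probs_ac_def absolutely_continuous_def by (simp add: prob_space_axioms)

lemma chi_measurable [measurable]: "chi \<theta> j \<in> borel_measurable borel"
  by (rule borel_measurable_continuous_onI[OF continuous_on_chi[OF compact_space admissible]])

lemma
  assumes "\<nu> \<in> probs_ac M"
  shows prob_space_law: "prob_space (law \<nu> (R l))"
    and sets_law: "sets (law \<nu> (R l)) = sets borel"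
    and integral_chi_law: "(\<integral>y. chi \<theta> j y \<partial>law \<nu> (R l)) = (\<integral>x. chi \<theta> j (R l x) \<partial>\<nu>)"
proof -
  have sets_eq: "sets \<nu> = sets M" and "prob_space \<nu>"
    using assms by (simp_all add: probs_ac_def)
  have [measurable]: "R l \<in> borel_measurable \<nu>"
    unfolding measurable_cong_sets[OF sets_eq refl] by (rule R_measurable)
  show "prob_space (law \<nu> (R l))"
    unfolding law_def using \<open>prob_space \<nu>\<close> by (rule prob_space.prob_space_distr) simp
  show "sets (law \<nu> (R l)) = sets borel"
    by (simp add: law_def)
  show "(\<integral>y. chi \<theta> j y \<partial>law \<nu> (R l)) = (\<integral>x. chi \<theta> j (R l x) \<partial>\<nu>)"
    unfolding law_def by (rule integral_distr) simp_all
qed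

lemma DE_law_eq_weighted_dist:
  assumes "\<nu> \<in> probs_ac M" "\<nu>' \<in> probs_ac M"
  shows "DE \<theta> (law \<nu> (R l)) (law \<nu>' (R l))
    = weighted_dist (\<lambda>j. \<integral>x. chi \<theta> j (R l x) \<partial>\<nu>) (\<lambda>j. \<integral>x. chi \<theta> j (R l x) \<partial>\<nu>')"
  using assms by (simp add: DE_eq_weighted_dist integral_chi_law)

lemma abs_integral_chi_diff_le_2:
  assumes "\<nu> \<in> probs_ac M" "\<nu>' \<in> probs_ac M"
  shows "\<bar>(\<integral>x. chi \<theta> j (R l x) \<partial>\<nu>) - (\<integral>x. chi \<theta> j (R l x) \<partial>\<nu>')\<bar> \<le> 2"
  using abs_integral_chi_le_1[OF compact_space admissible prob_space_law[OF assms(1), of l], of j]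
    abs_integral_chi_le_1[OF compact_space admissible prob_space_law[OF assms(2), of l], of j]
  by (simp add: integral_chi_law assms)

lemma DE_law_triangle:
  assumes "\<nu>\<^sub>1 \<in> probs_ac M" "\<nu>\<^sub>2 \<in> probs_ac M" "\<nu>\<^sub>3 \<in> probs_ac M"
  shows "DE \<theta> (law \<nu>\<^sub>1 (R l)) (law \<nu>\<^sub>3 (R l))
    \<le> DE \<theta> (law \<nu>\<^sub>1 (R l)) (law \<nu>\<^sub>2 (R l)) + DE \<theta> (law \<nu>\<^sub>2 (R l)) (law \<nu>\<^sub>3 (R l))"
  unfolding DE_law_eq_weighted_dist[OF assms(1,3)] DE_law_eq_weighted_dist[OF assms(1,2)]
    DE_law_eq_weighted_dist[OF assms(2,3)]
  by (intro weighted_dist_triangle[where C = 2] abs_integral_chi_diff_le_2 assms)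

lemma DE_law_commute:
  assumes "\<nu> \<in> probs_ac M" "\<nu>' \<in> probs_ac M"
  shows "DE \<theta> (law \<nu> (R l)) (law \<nu>' (R l)) = DE \<theta> (law \<nu>' (R l)) (law \<nu> (R l))"
  using assms by (simp add: DE_law_eq_weighted_dist weighted_dist_commute)

lemma DE_law_nonneg:
  assumes "\<nu> \<in> probs_ac M" "\<nu>' \<in> probs_ac M"
  shows "0 \<le> DE \<theta> (law \<nu> (R l)) (law \<nu>' (R l))"
  unfolding DE_law_eq_weighted_dist[OF assms]
  by (intro weighted_dist_nonneg[where C = 2] abs_integral_chi_diff_le_2 assms)

lemma DE_law_le_dP:
  assumes "\<nu> \<in> probs_ac M" "\<nu>' \<in> probs_ac M"
  shows "DE \<theta> (law \<nu> (R l)) (law \<nu>' (R l)) \<le> dP M \<nu> \<nu>' / 2"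
  unfolding DE_law_eq_weighted_dist[OF assms]
  by (intro weighted_dist_le abs_integral_diff_le_dP[OF prob_space_axioms assms]
      abs_chi_le_1[OF compact_space admissible]) simp

lemma DE_law_tendsto_zero:
  assumes "\<nu> \<in> probs_ac M"
  shows "(\<lambda>l. DE \<theta> (law \<nu> (R l)) (law M (R l))) \<longlonglongrightarrow> 0"
proof -
  obtain h where [measurable]: "h \<in> borel_measurable M" and h: "\<And>x. 0 \<le> h x" "integrable M h"
    "integral\<^sup>L M h = 1" and \<nu>_eq: "\<nu> = density M (\<lambda>x. ennreal (h x))"
    using probs_ac_density[OF prob_space_axioms assms] by blast
  have coordinate_lim: "(\<lambda>l. (\<integral>x. chi \<theta> j (R l x) \<partial>\<nu>) - (\<integral>x. chi \<theta> j (R l x) \<partial>M)) \<longlonglongrightarrow> 0"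
    for j
  proof -
    obtain L where "L-lipschitz_on UNIV (chi \<theta> j)"
      using lipschitz_chi[OF compact_space admissible] by blast
    then have "(\<lambda>l. \<integral>x. \<bar>chi \<theta> j (R l (T x)) - chi \<theta> j (R l x)\<bar> \<partial>M) \<longlonglongrightarrow> 0"
      by (rule integral_abs_lipschitz_diff_tendsto_zero[OF compact_space R_measurable R_asympt_inv _
            abs_chi_le_1[OF compact_space admissible]])
    from covariance_asympt_invariant_tendsto[OF h(2) _ abs_chi_le_1[OF compact_space admissible]
        this]
    show ?thesis
      by (simp add: covariance_def \<nu>_eq integral_real_density h)
  qed
  show ?thesis
    unfolding DE_law_eq_weighted_dist[OF assms M_in_probs_ac]
    by (rule weighted_dist_tendsto_zero[where C = 2,
          OF abs_integral_chi_diff_le_2[OF assms M_in_probs_ac] coordinate_lim])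
qed

lemma DE_law_le_via_M:
  assumes "\<nu> \<in> probs_ac M" "\<nu>' \<in> probs_ac M"
  shows "DE \<theta> (law \<nu> (R l)) (law \<nu>' (R l))
    \<le> DE \<theta> (law \<nu> (R l)) (law M (R l)) + DE \<theta> (law \<nu>' (R l)) (law M (R l))"
  using DE_law_triangle[OF assms(1) M_in_probs_ac assms(2)]
    DE_law_commute[OF M_in_probs_ac assms(2)]
  by simp

lemma DE_law_M_le:
  assumes "\<nu> \<in> probs_ac M" "\<nu>' \<in> probs_ac M"
  shows "DE \<theta> (law \<nu> (R l)) (law M (R l)) \<le> DE \<theta> (law \<nu>' (R l)) (law M (R l)) + dP M \<nu> \<nu>' / 2"
  using DE_law_triangle[OF assms M_in_probs_ac, of l] DE_law_le_dP[OF assms, of l] by linarith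

text \<open>Pointwise convergence on \<open>K\<close> is uniform because \<open>\<nu> \<mapsto> D\<^sub>\<frak>E(law\<^sub>\<nu> R\<^sub>l, law\<^sub>\<mu> R\<^sub>l)\<close>
  is \<open>1/2\<close>-Lipschitz for \<open>d\<^sub>\<frak>P\<close>, uniformly in \<open>l\<close>.\<close>
lemma DE_law_M_uniformly_small:
  assumes K: "dP_compact M K" and "0 < \<epsilon>"
  shows "\<forall>\<^sub>F l in sequentially. \<forall>\<nu>\<in>K. DE \<theta> (law \<nu> (R l)) (law M (R l)) < \<epsilon>"
proof (rule uniformly_tendsto_zero_if_seq_compact[where d = "\<lambda>\<nu> \<nu>'. dP M \<nu> \<nu>' / 2"])
  have K_ac: "K \<subseteq> probs_ac M"
    using K by (simp add: dP_compact_def)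
  then show "(\<lambda>l. DE \<theta> (law \<nu> (R l)) (law M (R l))) \<longlonglongrightarrow> 0" if "\<nu> \<in> K" for \<nu>
    using that by (intro DE_law_tendsto_zero) blast
  show "DE \<theta> (law \<nu> (R l)) (law M (R l)) \<le> DE \<theta> (law \<nu>' (R l)) (law M (R l)) + dP M \<nu> \<nu>' / 2"
    if "\<nu> \<in> K" "\<nu>' \<in> K" for l \<nu> \<nu>'
    using K_ac that by (intro DE_law_M_le) blast+
  show "\<exists>r \<nu>. strict_mono r \<and> \<nu> \<in> K \<and> (\<lambda>n. dP M (s (r n)) \<nu> / 2) \<longlonglongrightarrow> 0"
    if s_K: "\<forall>n. s n \<in> K" for s :: "nat \<Rightarrow> 'a measure"
  proof -
    have "\<forall>s :: nat \<Rightarrow> 'a measure. (\<forall>n. s n \<in> K) \<longrightarrow>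
        (\<exists>r \<nu>. strict_mono r \<and> \<nu> \<in> K \<and> (\<lambda>n. dP M (s (r n)) \<nu>) \<longlonglongrightarrow> 0)"
      using K unfolding dP_compact_def by (elim conjE)
    with s_K obtain r \<nu>
      where "strict_mono r" "\<nu> \<in> K" and dP_lim: "(\<lambda>n. dP M (s (r n)) \<nu>) \<longlonglongrightarrow> 0"
      by blast
    then show ?thesis
      using tendsto_divide_zero[OF dP_lim, of 2] by (intro exI conjI)
  qed
qed fact

theorem DE_law_uniformly_small:
  assumes K: "dP_compact M K" and "0 < \<epsilon>"
  shows "\<forall>\<^sub>F l in sequentially. \<forall>\<nu>\<in>K. \<forall>\<nu>'\<in>K. DE \<theta> (law \<nu> (R l)) (law \<nu>' (R l)) < \<epsilon>"
proof -
  have K_ac: "K \<subseteq> probs_ac M"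
    using K by (simp add: dP_compact_def)
  have "\<forall>\<^sub>F l in sequentially. \<forall>\<nu>\<in>K. DE \<theta> (law \<nu> (R l)) (law M (R l)) < \<epsilon> / 2"
    using \<open>0 < \<epsilon>\<close> by (intro DE_law_M_uniformly_small K) simp
  then show ?thesis
  proof (rule eventually_mono)
    fix l
    assume small: "\<forall>\<nu>\<in>K. DE \<theta> (law \<nu> (R l)) (law M (R l)) < \<epsilon> / 2"
    show "\<forall>\<nu>\<in>K. \<forall>\<nu>'\<in>K. DE \<theta> (law \<nu> (R l)) (law \<nu>' (R l)) < \<epsilon>"
    proof (intro ballI)
      fix \<nu> \<nu>'
      assume "\<nu> \<in> K" "\<nu>' \<in> K"
      then have "DE \<theta> (law \<nu> (R l)) (law \<nu>' (R l))
          \<le> DE \<theta> (law \<nu> (R l)) (law M (R l)) + DE \<theta> (law \<nu>' (R l)) (law M (R l))"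
        using K_ac by (intro DE_law_le_via_M) blast+
      moreover have "DE \<theta> (law \<nu> (R l)) (law M (R l)) < \<epsilon> / 2"
        "DE \<theta> (law \<nu>' (R l)) (law M (R l)) < \<epsilon> / 2"
        using small \<open>\<nu> \<in> K\<close> \<open>\<nu>' \<in> K\<close> by blast+
      ultimately show "DE \<theta> (law \<nu> (R l)) (law \<nu>' (R l)) < \<epsilon>"
        by linarith
    qed
  qed
qed

theorem weak_conv_law_transfer:
  fixes P :: "'e measure"
  assumes K: "dP_compact M K" and "\<And>l. \<nu>s l \<in> K" "\<And>l. \<nu>s' l \<in> K"
    and "weak_conv_law (\<lambda>l. law (\<nu>s' l) (R l)) P"
  shows "weak_conv_law (\<lambda>l. law (\<nu>s l) (R l)) P"
proof (rule weak_conv_law_if_DE_tendsto[OF compact_space admissible])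
  have ac: "\<nu>s l \<in> probs_ac M" "\<nu>s' l \<in> probs_ac M" for l
    using K assms(2,3) unfolding dP_compact_def by auto
  then show "prob_space (law (\<nu>s l) (R l))" "sets (law (\<nu>s l) (R l)) = sets borel"
    "prob_space (law (\<nu>s' l) (R l))" "sets (law (\<nu>s' l) (R l)) = sets borel" for l
    by (simp_all add: prob_space_law sets_law)
  show "(\<lambda>l. DE \<theta> (law (\<nu>s l) (R l)) (law (\<nu>s' l) (R l))) \<longlonglongrightarrow> 0"
  proof (rule order_tendstoI)
    show "\<forall>\<^sub>F l in sequentially. a < DE \<theta> (law (\<nu>s l) (R l)) (law (\<nu>s' l) (R l))" if "a < 0" for a
      by (intro always_eventually allI less_le_trans[OF that DE_law_nonneg[OF ac]])
    show "\<forall>\<^sub>F l in sequentially. DE \<theta> (law (\<nu>s l) (R l)) (law (\<nu>s' l) (R l)) < \<epsilon>" if "0 < \<epsilon>" for \<epsilon>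
      using DE_law_uniformly_small[OF K that] assms(2,3) by (auto elim: eventually_mono)
  qed
qed fact

end

theorem mainTheorem10:
  fixes \<mu> :: "'a measure" and T :: "'a \<Rightarrow> 'a"
    and R :: "nat \<Rightarrow> 'a \<Rightarrow> 'e::metric_space"
    and \<theta> :: "nat \<Rightarrow> 'e \<Rightarrow> real"
    and K :: "'a measure set"
  assumes erg: "ergodic_pps \<mu> T"
    and compE: "compact (UNIV :: 'e set)"
    and Rmeas: "\<And>l. R l \<in> borel_measurable \<mu>"
    and Rinv: "asympt_inv_in_measure \<mu> T R"
    and Kcomp: "dP_compact \<mu> K"
    and adm: "admissible_seq \<theta>"
  shows "(\<forall>\<epsilon>>0. \<forall>\<^sub>F l in sequentially.
            \<forall>\<nu>\<in>K. \<forall>\<nu>'\<in>K. DE \<theta> (law \<nu> (R l)) (law \<nu>' (R l)) < \<epsilon>)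
    \<and> (\<forall>(P :: 'w measure) (Rr :: 'w \<Rightarrow> 'e) (\<nu>s :: nat \<Rightarrow> 'a measure) \<nu>bs.
          prob_space P \<longrightarrow> Rr \<in> borel_measurable P \<longrightarrow>
          (\<forall>l. \<nu>s l \<in> K) \<longrightarrow> (\<forall>l. \<nu>bs l \<in> K) \<longrightarrow>
          weak_conv_law (\<lambda>l. law (\<nu>bs l) (R l)) (law P Rr) \<longrightarrow>
          weak_conv_law (\<lambda>l. law (\<nu>s l) (R l)) (law P Rr))"
proof -
  interpret ergodic_system \<mu> T
    using erg by (rule ergodic_system_if_ergodic_pps)
  interpret asympt_invariant_observables \<mu> T R \<theta>
    using compE Rmeas Rinv adm by unfold_locales
  show ?thesis
    using DE_law_uniformly_small[OF Kcomp] weak_conv_law_transfer[OF Kcomp] by blast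
qed

end
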